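(* Let $d\ge5$ and $\alpha\in(0,\frac12)$ with $d\alpha\in\mathbb{Z}$. Assume (induction hypothesis) that the intersection of the subgroup generated by the $L_q$, $q\in\mathcal A_{d-1}$, with $SL(\mathbb{C}^{\mathcal A_{d-1}})$ is dense for the usual topology (or Zariski dense) in $SU^*(Q'_\alpha)$. Let $p\in\mathcal A_d$, let $w_p$ be a nonzero vector spanning the $Q_\alpha$-orthogonal of the hyperplane $H_p=\mathrm{span}\{e_q:q\ne p\}$ of $\mathbb{C}^{\mathcal A_d}$, and let $\mathrm{Stab}(w_p)$ be the stabilizer of $w_p$ in $SU(Q_\alpha)$. Then the intersection with $SU(Q_\alpha)$ of the subgroup generated by the $L_q$, $q\in\mathcal A_d$, $q\ne p$, is Zariski dense in $\mathrm{Stab}(w_p)$.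
   Context: For $n\ge2$ let $\mathcal A_n=\{1-n,3-n,\dots,n-1\}$ (ordered as integers) and $(e_q)$ the canonical basis of $\mathbb{C}^{\mathcal A_n}$; $\rho=e^{2\pi i\alpha}$, $\zeta=\rho^{-1}$. For $p\in\mathcal A_n$, $L_p$ is the linear operator on $\mathbb{C}^{\mathcal A_n}$ with $L_p(e_q)=e_q-e_p$ if $q>p$, $L_p(e_q)=e_q-\zeta e_p$ if $q<p$, $L_p(e_p)=-\zeta e_p$. $Q_\alpha$ on $\mathbb{C}^{\mathcal A_d}$ is the hermitian form (linear in the first argument, conjugate-linear in the second) with $Q_\alpha(e_p,e_p)=1$, $Q_\alpha(e_p,e_{p'})=(1+\zeta)^{-1}=\frac12(1+i\tan\pi\alpha)$ for $p>p'$; it is non-degenerate under the hypothesis. $Q'_\alpha$ is the form defined by the same formulas on $\mathbb{C}^{\mathcal A_{d-1}}$; since $d\alpha\in\mathbb{Z}$ its kernel is a line spanned by a vector $e'$, and $SU^*(Q'_\alpha)$ is the group of determinant-one linear automorphisms of $\mathbb{C}^{\mathcal A_{d-1}}$ preserving $Q'_\alpha$ and fixing $e'$. $SU(Q_\alpha)$ is the group of determinant-one automorphisms preserving $Q_\alpha$. *)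

theory Defs
  imports Complex_Main "Jordan_Normal_Form.Determinant"
begin

text \<open>Index convention: the basis vector e_q, q in A_n = {1-n,3-n,...,n-1}, is represented
  by the index i < n with q = 2i+1-n.  This is an order-preserving bijection
  {0..<n} -> A_n, and all definitions below only use the order of the indices.
  Vectors of C^{A_n} are complex vec of dimension n, operators are complex n x n matrices
  (column j = image of e_j).\<close>

definition zeta :: "real \<Rightarrow> complex" where
  "zeta \<alpha> = cis (- 2 * pi * \<alpha>)"

definition Lop :: "nat \<Rightarrow> real \<Rightarrow> nat \<Rightarrow> complex mat" where
  "Lop n \<alpha> p = mat n n (\<lambda>(i, j).
      if j = p then (if i = p then - zeta \<alpha> else 0)
      else (if i = j then 1 else 0) - (if i = p then (if j > p then 1 else zeta \<alpha>) else 0))"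

definition Qgram :: "real \<Rightarrow> nat \<Rightarrow> nat \<Rightarrow> complex" where
  "Qgram \<alpha> i j = (if i = j then 1 else if i > j then inverse (1 + zeta \<alpha>)
                   else cnj (inverse (1 + zeta \<alpha>)))"

definition Qform :: "nat \<Rightarrow> real \<Rightarrow> complex vec \<Rightarrow> complex vec \<Rightarrow> complex" where
  "Qform n \<alpha> x y = (\<Sum>i<n. \<Sum>j<n. x $ i * cnj (y $ j) * Qgram \<alpha> i j)"

definition preserves_form :: "nat \<Rightarrow> real \<Rightarrow> complex mat \<Rightarrow> bool" where
  "preserves_form n \<alpha> g \<longleftrightarrow>
     (\<forall>x \<in> carrier_vec n. \<forall>y \<in> carrier_vec n. Qform n \<alpha> (g *\<^sub>v x) (g *\<^sub>v y) = Qform n \<alpha> x y)"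

definition SU_Q :: "nat \<Rightarrow> real \<Rightarrow> complex mat set" where
  "SU_Q n \<alpha> = {g \<in> carrier_mat n n. det g = 1 \<and> preserves_form n \<alpha> g}"

definition form_kernel :: "nat \<Rightarrow> real \<Rightarrow> complex vec set" where
  "form_kernel n \<alpha> = {v \<in> carrier_vec n. \<forall>y \<in> carrier_vec n. Qform n \<alpha> v y = 0}"

text \<open>SU^*(Q): elements of SU(Q) fixing the kernel (a line spanned by e'), i.e. fixing e'.\<close>
definition SU_star :: "nat \<Rightarrow> real \<Rightarrow> complex mat set" where
  "SU_star n \<alpha> = {g \<in> SU_Q n \<alpha>. \<forall>v \<in> form_kernel n \<alpha>. g *\<^sub>v v = v}"

definition SL_mat :: "nat \<Rightarrow> complex mat set" where
  "SL_mat n = {g \<in> carrier_mat n n. det g = 1}"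

inductive_set gen_group :: "nat \<Rightarrow> complex mat set \<Rightarrow> complex mat set"
  for n :: nat and S :: "complex mat set" where
  gen_one: "1\<^sub>m n \<in> gen_group n S"
| gen_gen: "s \<in> S \<Longrightarrow> s \<in> gen_group n S"
| gen_mult: "g \<in> gen_group n S \<Longrightarrow> h \<in> gen_group n S \<Longrightarrow> g * h \<in> gen_group n S"
| gen_inv: "g \<in> gen_group n S \<Longrightarrow> h \<in> carrier_mat n n \<Longrightarrow> g * h = 1\<^sub>m n \<Longrightarrow> h * g = 1\<^sub>m n
            \<Longrightarrow> h \<in> gen_group n S"

text \<open>Real polynomial functions on M_n(C) = R^{2n^2}: polynomials in the real and imaginary
  parts of the matrix entries (the real Zariski topology, SU(Q) being a real algebraic group).\<close>
inductive_set real_poly_fun :: "nat \<Rightarrow> (complex mat \<Rightarrow> real) set" for n :: nat where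
  rp_const: "(\<lambda>A. c) \<in> real_poly_fun n"
| rp_re: "i < n \<Longrightarrow> j < n \<Longrightarrow> (\<lambda>A. Re (A $$ (i, j))) \<in> real_poly_fun n"
| rp_im: "i < n \<Longrightarrow> j < n \<Longrightarrow> (\<lambda>A. Im (A $$ (i, j))) \<in> real_poly_fun n"
| rp_add: "f \<in> real_poly_fun n \<Longrightarrow> g \<in> real_poly_fun n \<Longrightarrow> (\<lambda>A. f A + g A) \<in> real_poly_fun n"
| rp_mult: "f \<in> real_poly_fun n \<Longrightarrow> g \<in> real_poly_fun n \<Longrightarrow> (\<lambda>A. f A * g A) \<in> real_poly_fun n"

definition zariski_dense_in :: "nat \<Rightarrow> complex mat set \<Rightarrow> complex mat set \<Rightarrow> bool" where
  "zariski_dense_in n S G \<longleftrightarrow> S \<subseteq> G \<and>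
     (\<forall>f \<in> real_poly_fun n. (\<forall>A \<in> S. f A = 0) \<longrightarrow> (\<forall>A \<in> G. f A = 0))"

definition usual_dense_in :: "nat \<Rightarrow> complex mat set \<Rightarrow> complex mat set \<Rightarrow> bool" where
  "usual_dense_in n S G \<longleftrightarrow> S \<subseteq> G \<and>
     (\<forall>A \<in> G. \<forall>\<epsilon> > 0. \<exists>B \<in> S. \<forall>i < n. \<forall>j < n. cmod (A $$ (i, j) - B $$ (i, j)) < \<epsilon>)"

end

theory Submission
  imports Defs "HOL-Computational_Algebra.Fundamental_Theorem_Algebra"
begin

text \<open>Write \<open>Stab\<close> for the stabiliser of \<open>w = w\<^sub>p\<close> in \<open>SU(Q\<^sub>\<alpha>)\<close>. Since \<open>d\<alpha> \<in> \<int>\<close>, the kernel of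
  \<open>Q'\<^sub>\<alpha>\<close> lifts into \<open>H\<^sub>p\<close> and spans the line of \<open>w\<close>; so \<open>w \<in> H\<^sub>p\<close> is isotropic and \<open>Q(x, w)\<close> is a
  nonzero multiple of \<open>x\<^sub>p\<close>. Hence every \<open>g \<in> Stab\<close> fixes the \<open>p\<close>-th coordinate, and deleting row and
  column \<open>p\<close> maps \<open>Stab\<close> onto \<open>SU\<^sup>*(Q')\<close> with kernel the central transvections
  \<open>\<tau>\<^sub>t : x \<mapsto> x + i t Q(x, w) w\<close>. This map has a polynomial section \<open>\<sigma>\<close>, so \<open>Stab = \<sigma>(SU\<^sup>*(Q')) \<tau>\<^sub>\<real>\<close>.

  The generators \<open>L\<^sub>q\<close>, \<open>q \<noteq> p\<close>, restrict to the generators of the smaller group, so \<open>\<sigma>\<close> maps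
  \<open>\<Gamma>' \<inter> SL\<close> into \<open>\<Gamma> \<tau>\<^sub>\<real>\<close>. Transvections drop out of commutators, and every \<open>\<tau>\<^sub>t\<close> is a commutator of
  two Eichler transformations. So, using the Zariski density of \<open>\<Gamma>' \<inter> SL\<close> three times, a polynomial
  vanishing on \<open>\<Gamma> \<inter> SU(Q)\<close> vanishes on \<open>\<gamma> [\<sigma> h\<^sub>1, \<sigma> h\<^sub>2]\<close>, hence on \<open>\<gamma> \<tau>\<^sub>t\<close>, hence on
  \<open>\<sigma>(h) \<tau>\<^sub>t\<close>, i.e. on all of \<open>Stab\<close>.\<close>

section \<open>Polynomial functions of matrices\<close>

lemma real_poly_fun_cmult: "f \<in> real_poly_fun n \<Longrightarrow> (\<lambda>A. c * f A) \<in> real_poly_fun n"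
  using rp_mult[OF rp_const[of c n]] by simp

lemma real_poly_fun_diff:
  "f \<in> real_poly_fun n \<Longrightarrow> g \<in> real_poly_fun n \<Longrightarrow> (\<lambda>A. f A - g A) \<in> real_poly_fun n"
  using rp_add[OF _ real_poly_fun_cmult[of g n "-1"], of f] by simp

definition complex_poly_fun :: "nat \<Rightarrow> (complex mat \<Rightarrow> complex) \<Rightarrow> bool" where
  "complex_poly_fun n \<phi> \<longleftrightarrow> (\<lambda>A. Re (\<phi> A)) \<in> real_poly_fun n \<and> (\<lambda>A. Im (\<phi> A)) \<in> real_poly_fun n"

lemma complex_poly_fun_const [intro]: "complex_poly_fun n (\<lambda>A. c)"
  unfolding complex_poly_fun_def by (auto intro: rp_const)

lemma complex_poly_fun_entry [intro]: "i < n \<Longrightarrow> j < n \<Longrightarrow> complex_poly_fun n (\<lambda>A. A $$ (i,j))"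
  unfolding complex_poly_fun_def by (auto intro: rp_re rp_im)

lemma complex_poly_fun_add [intro]:
  "complex_poly_fun n f \<Longrightarrow> complex_poly_fun n g \<Longrightarrow> complex_poly_fun n (\<lambda>A. f A + g A)"
  unfolding complex_poly_fun_def by (auto intro: rp_add)

lemma complex_poly_fun_mult [intro]:
  "complex_poly_fun n f \<Longrightarrow> complex_poly_fun n g \<Longrightarrow> complex_poly_fun n (\<lambda>A. f A * g A)"
  unfolding complex_poly_fun_def by (auto intro!: rp_add real_poly_fun_diff rp_mult)

lemma complex_poly_fun_cmult [intro]: "complex_poly_fun n f \<Longrightarrow> complex_poly_fun n (\<lambda>A. c * f A)"
  using complex_poly_fun_mult[OF complex_poly_fun_const[of n c]] by simp

lemma complex_poly_fun_diff [intro]: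
  "complex_poly_fun n f \<Longrightarrow> complex_poly_fun n g \<Longrightarrow> complex_poly_fun n (\<lambda>A. f A - g A)"
  using complex_poly_fun_add[OF _ complex_poly_fun_cmult[of n g "-1"], of f] by simp

lemma complex_poly_fun_cnj [intro]: "complex_poly_fun n f \<Longrightarrow> complex_poly_fun n (\<lambda>A. cnj (f A))"
  unfolding complex_poly_fun_def using real_poly_fun_cmult[of "\<lambda>A. Im (f A)" n "-1"] by auto

lemma complex_poly_fun_sum [intro]:
  "finite K \<Longrightarrow> (\<And>k. k \<in> K \<Longrightarrow> complex_poly_fun n (f k)) \<Longrightarrow> complex_poly_fun n (\<lambda>A. \<Sum>k\<in>K. f k A)"
  by (induction K rule: finite_induct) auto

lemma complex_poly_fun_prod [intro]:
  "finite K \<Longrightarrow> (\<And>k. k \<in> K \<Longrightarrow> complex_poly_fun n (f k)) \<Longrightarrow> complex_poly_fun n (\<lambda>A. \<Prod>k\<in>K. f k A)"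
  by (induction K rule: finite_induct) auto

definition poly_mat_fun :: "nat \<Rightarrow> nat \<Rightarrow> (complex mat \<Rightarrow> complex mat) \<Rightarrow> bool" where
  "poly_mat_fun n k M \<longleftrightarrow>
     (\<forall>A. M A \<in> carrier_mat k k) \<and> (\<forall>i<k. \<forall>j<k. complex_poly_fun n (\<lambda>A. M A $$ (i,j)))"

lemma poly_mat_funD:
  assumes "poly_mat_fun n k M"
  shows "M A \<in> carrier_mat k k" "i < k \<Longrightarrow> j < k \<Longrightarrow> complex_poly_fun n (\<lambda>A. M A $$ (i,j))"
  using assms unfolding poly_mat_fun_def by auto

lemma poly_mat_fun_const: "C \<in> carrier_mat k k \<Longrightarrow> poly_mat_fun n k (\<lambda>A. C)"
  unfolding poly_mat_fun_def by auto

lemma poly_mat_fun_mult: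
  assumes M: "poly_mat_fun n k M" and N: "poly_mat_fun n k N"
  shows "poly_mat_fun n k (\<lambda>A. M A * N A)"
  unfolding poly_mat_fun_def
proof (intro conjI allI impI)
  fix A show "M A * N A \<in> carrier_mat k k"
    using mult_carrier_mat[OF poly_mat_funD(1)[OF M] poly_mat_funD(1)[OF N]] .
next
  fix i j assume ij: "i < k" "j < k"
  have entry: "(\<lambda>A. (M A * N A) $$ (i,j)) = (\<lambda>A. \<Sum>l\<in>{0..<k}. M A $$ (i,l) * N A $$ (l,j))"
    using carrier_matD[OF poly_mat_funD(1)[OF M]] carrier_matD[OF poly_mat_funD(1)[OF N]] ij
    by (intro ext) (simp add: row_def col_def scalar_prod_def)
  show "complex_poly_fun n (\<lambda>A. (M A * N A) $$ (i,j))" unfolding entry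
    using poly_mat_funD(2)[OF M] poly_mat_funD(2)[OF N] ij
    by (intro complex_poly_fun_sum complex_poly_fun_mult) auto
qed

lemma poly_mat_fun_delete:
  assumes M: "poly_mat_fun n k M"
  shows "poly_mat_fun n (k - 1) (\<lambda>A. mat_delete (M A) i j)"
  unfolding poly_mat_fun_def
proof (intro conjI allI impI)
  fix A show "mat_delete (M A) i j \<in> carrier_mat (k - 1) (k - 1)"
    by (rule mat_delete_carrier[OF poly_mat_funD(1)[OF M]])
next
  fix i' j' assume "i' < k - 1" "j' < k - 1"
  then have "(\<lambda>A. mat_delete (M A) i j $$ (i', j')) = (\<lambda>A. M A $$ (insert_index i i', insert_index j j'))"
    using carrier_matD[OF poly_mat_funD(1)[OF M]] by (intro ext) (simp add: mat_delete_def insert_index_def)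
  then show "complex_poly_fun n (\<lambda>A. mat_delete (M A) i j $$ (i', j'))"
    using poly_mat_funD(2)[OF M] \<open>i' < k - 1\<close> \<open>j' < k - 1\<close> by (auto simp: insert_index_def)
qed

lemma complex_poly_fun_det:
  assumes M: "poly_mat_fun n k M"
  shows "complex_poly_fun n (\<lambda>A. det (M A))"
proof -
  have det: "(\<lambda>A. det (M A)) =
      (\<lambda>A. \<Sum>p \<in> {p. p permutes {0..<k}}. signof p * (\<Prod>i = 0..<k. M A $$ (i, p i)))"
    using det_def'[OF poly_mat_funD(1)[OF M]] by auto
  show ?thesis unfolding det
  proof (intro complex_poly_fun_sum complex_poly_fun_cmult complex_poly_fun_prod)
    fix p i assume "p \<in> {p. p permutes {0..<k}}" "i \<in> {0..<k}"
    then have "p i < k" "i < k" using permutes_in_image by fastforce+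
    then show "complex_poly_fun n (\<lambda>A. M A $$ (i, p i))" using poly_mat_funD(2)[OF M] by blast
  qed (auto simp: finite_permutations)
qed

lemma poly_mat_fun_adj:
  assumes M: "poly_mat_fun n k M"
  shows "poly_mat_fun n k (\<lambda>A. adj_mat (M A))"
  unfolding poly_mat_fun_def
proof (intro conjI allI impI)
  fix A show "adj_mat (M A) \<in> carrier_mat k k" using adj_mat(1)[OF poly_mat_funD(1)[OF M]] .
next
  fix i j assume "i < k" "j < k"
  then have "(\<lambda>A. adj_mat (M A) $$ (i,j)) = (\<lambda>A. (-1)^(j+i) * det (mat_delete (M A) j i))"
    using carrier_matD[OF poly_mat_funD(1)[OF M]] by (intro ext) (simp add: adj_mat_def cofactor_def)
  then show "complex_poly_fun n (\<lambda>A. adj_mat (M A) $$ (i,j))"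
    using complex_poly_fun_det[OF poly_mat_fun_delete[OF M]] by auto
qed

lemma real_poly_fun_comp:
  assumes "f \<in> real_poly_fun k" and M: "poly_mat_fun n k M"
  shows "(\<lambda>A. f (M A)) \<in> real_poly_fun n"
  using assms(1)
proof (induction f rule: real_poly_fun.induct)
  case (rp_re i j) then show ?case using poly_mat_funD(2)[OF M] unfolding complex_poly_fun_def by auto
next
  case (rp_im i j) then show ?case using poly_mat_funD(2)[OF M] unfolding complex_poly_fun_def by auto
next
  case (rp_add f g) then show ?case by (auto intro: real_poly_fun.rp_add)
next
  case (rp_mult f g) then show ?case by (auto intro: real_poly_fun.rp_mult)
qed (rule real_poly_fun.rp_const)

lemma real_poly_fun_tendsto:
  assumes "f \<in> real_poly_fun n"
    and "\<And>i j. i < n \<Longrightarrow> j < n \<Longrightarrow> (\<lambda>m. B m $$ (i,j)) \<longlonglongrightarrow> A $$ (i,j)"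
  shows "(\<lambda>m. f (B m)) \<longlonglongrightarrow> f A"
  using assms
proof (induction f rule: real_poly_fun.induct)
  case (rp_re i j) then show ?case by (auto intro: tendsto_Re)
next
  case (rp_im i j) then show ?case by (auto intro: tendsto_Im)
next
  case (rp_add f g) then show ?case by (auto intro: tendsto_add)
next
  case (rp_mult f g) then show ?case by (auto intro: tendsto_mult)
qed simp

lemma usual_dense_imp_zariski_dense:
  assumes "usual_dense_in n S G"
  shows "zariski_dense_in n S G"
  unfolding zariski_dense_in_def
proof (intro conjI ballI impI)
  show "S \<subseteq> G" using assms unfolding usual_dense_in_def by auto
  fix f A assume f: "f \<in> real_poly_fun n" and van: "\<forall>A\<in>S. f A = 0" and A: "A \<in> G"
  have "\<forall>m. \<exists>B\<in>S. \<forall>i<n. \<forall>j<n. cmod (A $$ (i, j) - B $$ (i, j)) < inverse (real (Suc m))"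
    using assms A unfolding usual_dense_in_def by auto
  then obtain B where B: "\<And>m. B m \<in> S"
    "\<And>m i j. i < n \<Longrightarrow> j < n \<Longrightarrow> cmod (A $$ (i, j) - B m $$ (i, j)) < inverse (real (Suc m))"
    by metis
  have "(\<lambda>m. B m $$ (i,j)) \<longlonglongrightarrow> A $$ (i,j)" if "i < n" "j < n" for i j
    using B(2)[OF that] by (intro LIM_zero_cancel[OF LIMSEQ_norm_0]) (simp add: norm_minus_commute inverse_eq_divide)
  then have "(\<lambda>m. f (B m)) \<longlonglongrightarrow> f A" by (rule real_poly_fun_tendsto[OF f])
  moreover have "(\<lambda>m. f (B m)) \<longlonglongrightarrow> 0" using van B(1) by simp
  ultimately show "f A = 0" by (rule LIMSEQ_unique)
qed


section \<open>Determinants of polynomial one-parameter families\<close>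

definition poly_function :: "(complex \<Rightarrow> complex) \<Rightarrow> bool" where
  "poly_function f \<longleftrightarrow> (\<exists>P. \<forall>s. f s = poly P s)"

lemma poly_function_const [intro]: "poly_function (\<lambda>s. c)"
  unfolding poly_function_def by (rule exI[of _ "[:c:]"]) simp

lemma poly_function_id [intro]: "poly_function (\<lambda>s. s)"
  unfolding poly_function_def by (rule exI[of _ "[:0,1:]"]) simp

lemma poly_function_add [intro]: "poly_function f \<Longrightarrow> poly_function g \<Longrightarrow> poly_function (\<lambda>s. f s + g s)"
  unfolding poly_function_def by (metis poly_add)

lemma poly_function_mult [intro]: "poly_function f \<Longrightarrow> poly_function g \<Longrightarrow> poly_function (\<lambda>s. f s * g s)"
  unfolding poly_function_def by (metis poly_mult)

lemma poly_function_sum [intro]: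
  "finite K \<Longrightarrow> (\<And>k. k \<in> K \<Longrightarrow> poly_function (f k)) \<Longrightarrow> poly_function (\<lambda>s. \<Sum>k\<in>K. f k s)"
  by (induction K rule: finite_induct) auto

lemma poly_function_prod [intro]:
  "finite K \<Longrightarrow> (\<And>k. k \<in> K \<Longrightarrow> poly_function (f k)) \<Longrightarrow> poly_function (\<lambda>s. \<Prod>k\<in>K. f k s)"
  by (induction K rule: finite_induct) auto

lemma poly_function_det:
  assumes "\<And>s. M s \<in> carrier_mat k k"
    and "\<And>i j. i < k \<Longrightarrow> j < k \<Longrightarrow> poly_function (\<lambda>s. M s $$ (i,j))"
  shows "poly_function (\<lambda>s. det (M s))"
proof -
  have det: "(\<lambda>s. det (M s)) =
      (\<lambda>s. \<Sum>p \<in> {p. p permutes {0..<k}}. signof p * (\<Prod>i = 0..<k. M s $$ (i, p i)))"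
    using det_def'[OF assms(1)] by auto
  show ?thesis unfolding det
  proof (intro poly_function_sum poly_function_mult poly_function_prod poly_function_const)
    fix p i assume "p \<in> {p. p permutes {0..<k}}" "i \<in> {0..<k}"
    then have "p i < k" "i < k" using permutes_in_image by fastforce+
    then show "poly_function (\<lambda>s. M s $$ (i, p i))" using assms(2) by blast
  qed (auto simp: finite_permutations)
qed

text \<open>\<open>s \<mapsto> det (M s)\<close> is a polynomial without roots, hence constant.\<close>
lemma det_poly_family_eq_1:
  assumes "\<And>s. M s \<in> carrier_mat k k"
    and "\<And>i j. i < k \<Longrightarrow> j < k \<Longrightarrow> poly_function (\<lambda>s. M s $$ (i,j))"
    and "\<And>s. M s * M (-s) = 1\<^sub>m k"
    and "M 0 = 1\<^sub>m k"
  shows "det (M s) = 1"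
proof -
  obtain P where P: "\<And>s. det (M s) = poly P s"
    using poly_function_det[OF assms(1,2)] unfolding poly_function_def by blast
  have "poly P s * poly P (-s) = 1" for s
    using det_mult[OF assms(1) assms(1), of s "-s"] assms(3)[of s] P by simp
  then have "constant (poly P)"
    using fundamental_theorem_of_algebra by (metis mult_zero_left zero_neq_one)
  then have "poly P s = poly P 0" unfolding constant_def by blast
  then show ?thesis using P[of s] P[of 0] assms(4) by simp
qed

lemma mult_mat_vec_unit_vec_index:
  fixes A :: "'a :: semiring_1 mat"
  shows "A \<in> carrier_mat m n \<Longrightarrow> i < m \<Longrightarrow> j < n \<Longrightarrow> (A *\<^sub>v unit_vec n j) $ i = A $$ (i,j)"
  by simp

lemma mat_eq_by_mult_vecI:
  fixes A B :: "'a :: comm_ring_1 mat"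
  assumes "A \<in> carrier_mat m n" "B \<in> carrier_mat m n"
    and "\<And>x. x \<in> carrier_vec n \<Longrightarrow> A *\<^sub>v x = B *\<^sub>v x"
  shows "A = B"
proof (rule eq_matI)
  fix i j assume "i < dim_row B" "j < dim_col B"
  then have ij: "i < m" "j < n" using assms(2) by auto
  have "A $$ (i,j) = (A *\<^sub>v unit_vec n j) $ i" using mult_mat_vec_unit_vec_index[OF assms(1) ij] ..
  also have "\<dots> = (B *\<^sub>v unit_vec n j) $ i" using assms(3)[of "unit_vec n j"] by simp
  also have "\<dots> = B $$ (i,j)" using mult_mat_vec_unit_vec_index[OF assms(2) ij] .
  finally show "A $$ (i,j) = B $$ (i,j)" .
qed (use assms in auto)

definition outer :: "'a :: comm_ring_1 vec \<Rightarrow> 'a vec \<Rightarrow> 'a mat" where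
  "outer a b = mat (dim_vec a) (dim_vec b) (\<lambda>(i,j). a $ i * b $ j)"

lemma outer_carrier [simp]: "a \<in> carrier_vec n \<Longrightarrow> b \<in> carrier_vec m \<Longrightarrow> outer a b \<in> carrier_mat n m"
  unfolding outer_def by auto

lemma outer_dims [simp]: "dim_row (outer a b) = dim_vec a" "dim_col (outer a b) = dim_vec b"
  unfolding outer_def by simp_all

lemma outer_mult_vec:
  assumes "a \<in> carrier_vec n" "b \<in> carrier_vec m" "x \<in> carrier_vec m"
  shows "outer a b *\<^sub>v x = (b \<bullet> x) \<cdot>\<^sub>v a"
proof (rule eq_vecI)
  fix i assume "i < dim_vec ((b \<bullet> x) \<cdot>\<^sub>v a)"
  then show "(outer a b *\<^sub>v x) $ i = ((b \<bullet> x) \<cdot>\<^sub>v a) $ i"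
    using assms unfolding outer_def
    by (auto simp: row_def scalar_prod_def sum_distrib_right mult.commute mult.left_commute intro!: sum.cong)
      (simp add: sum_distrib_left)
qed (use assms in \<open>auto simp: outer_def\<close>)

lemma sum_lessThan_insert_index:
  assumes "p < n"
  shows "(\<Sum>i<n. f i) = f p + (\<Sum>i<n-1. f (insert_index p i))"
proof -
  have "{..<n} = insert p (insert_index p ` {..<n-1})"
  proof (intro equalityI subsetI)
    fix k assume k: "k \<in> {..<n}"
    show "k \<in> insert p (insert_index p ` {..<n-1})"
    proof (cases "k = p")
      case False
      then have "k = insert_index p (delete_index p k)" "delete_index p k < n - 1"
        using k assms by (auto simp: delete_index_def)
      then show ?thesis by blast
    qed simp
  qed (use assms in \<open>auto simp: insert_index_def\<close>)
  moreover have "p \<notin> insert_index p ` {..<n-1}" by (auto simp: insert_index_def)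
  ultimately show ?thesis by (simp add: sum.reindex insert_index_inj_on)
qed

lemma imaginary_multiple:
  fixes c b :: complex
  assumes "b \<noteq> 0" "Re (c * cnj b) = 0"
  shows "\<exists>s::real. c = \<i> * of_real s * b"
proof -
  define u where "u = c * cnj b"
  have u: "u = \<i> * of_real (Im u)" using assms(2) unfolding u_def by (simp add: complex_eq_iff)
  have "c * of_real ((cmod b)\<^sup>2) = u * b" unfolding u_def complex_norm_square by (simp add: algebra_simps)
  also have "\<dots> = \<i> * of_real (Im u) * b" using u by simp
  finally have "c = \<i> * of_real (Im u / (cmod b)\<^sup>2) * b" using assms(1) by (simp add: field_simps)
  then show ?thesis by blast
qed

definition vec_cnj :: "complex vec \<Rightarrow> complex vec" where
  "vec_cnj y = vec (dim_vec y) (\<lambda>i. cnj (y $ i))"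

lemma vec_cnj_vec_cnj [simp]: "vec_cnj (vec_cnj y) = y"
  unfolding vec_cnj_def by (intro eq_vecI) auto

lemma vec_cnj_carrier [simp]: "vec_cnj y \<in> carrier_vec n \<longleftrightarrow> y \<in> carrier_vec n"
  unfolding vec_cnj_def carrier_vec_def by simp

section \<open>The hermitian form\<close>

lemma Qgram_cnj [simp]: "cnj (Qgram a i j) = Qgram a j i"
  unfolding Qgram_def by auto

lemma Qgram_diag [simp]: "Qgram a i i = 1"
  unfolding Qgram_def by auto

lemma Qgram_insert_index [simp]: "Qgram a (insert_index p i) (insert_index p j) = Qgram a i j"
  unfolding Qgram_def insert_index_def by auto

definition Qdual :: "nat \<Rightarrow> real \<Rightarrow> complex vec \<Rightarrow> complex vec" where
  "Qdual n a y = vec n (\<lambda>i. \<Sum>j<n. cnj (y $ j) * Qgram a i j)"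

lemma Qdual_carrier [simp]: "Qdual n a y \<in> carrier_vec n" "dim_vec (Qdual n a y) = n"
  unfolding Qdual_def by simp_all

lemma Qform_eq_scalar_prod: "x \<in> carrier_vec n \<Longrightarrow> Qform n a x y = x \<bullet> Qdual n a y"
  unfolding scalar_prod_def Qdual_def Qform_def
  by (simp add: atLeast0LessThan sum_distrib_left mult.assoc)

lemma Qform_swap: "Qform n a y x = cnj (Qform n a x y)"
proof -
  have "cnj (Qform n a x y) = (\<Sum>i<n. \<Sum>j<n. cnj (x$i) * y$j * Qgram a j i)"
    unfolding Qform_def cnj_sum by simp
  also have "\<dots> = Qform n a y x"
    unfolding Qform_def by (subst sum.swap) (simp add: ac_simps)
  finally show ?thesis by simp
qed

lemma Qform_add_left:
  "x \<in> carrier_vec n \<Longrightarrow> y \<in> carrier_vec n \<Longrightarrow> Qform n a (x + y) z = Qform n a x z + Qform n a y z"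
  by (simp add: Qform_eq_scalar_prod add_scalar_prod_distrib[of _ n])

lemma Qform_diff_left:
  "x \<in> carrier_vec n \<Longrightarrow> y \<in> carrier_vec n \<Longrightarrow> Qform n a (x - y) z = Qform n a x z - Qform n a y z"
  by (simp add: Qform_eq_scalar_prod minus_scalar_prod_distrib[of _ n])

lemma Qform_smult_left: "x \<in> carrier_vec n \<Longrightarrow> Qform n a (c \<cdot>\<^sub>v x) z = c * Qform n a x z"
  by (simp add: Qform_eq_scalar_prod smult_scalar_prod_distrib[of _ n])

lemma Qform_add_right:
  "x \<in> carrier_vec n \<Longrightarrow> y \<in> carrier_vec n \<Longrightarrow> Qform n a z (x + y) = Qform n a z x + Qform n a z y"
  by (subst (1 2 3) Qform_swap) (simp add: Qform_add_left)

lemma Qform_diff_right: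
  "x \<in> carrier_vec n \<Longrightarrow> y \<in> carrier_vec n \<Longrightarrow> Qform n a z (x - y) = Qform n a z x - Qform n a z y"
  by (subst (1 2 3) Qform_swap) (simp add: Qform_diff_left)

lemma Qform_smult_right: "x \<in> carrier_vec n \<Longrightarrow> Qform n a z (c \<cdot>\<^sub>v x) = cnj c * Qform n a z x"
  by (subst (1 2) Qform_swap) (simp add: Qform_smult_left)

lemmas Qform_linear =
  Qform_add_left Qform_diff_left Qform_smult_left Qform_add_right Qform_diff_right Qform_smult_right

lemma Qform_unit_vec_left:
  assumes "i < n"
  shows "Qform n a (unit_vec n i) y = (\<Sum>j<n. cnj (y $ j) * Qgram a i j)"
proof -
  have "Qform n a (unit_vec n i) y = (\<Sum>k<n. if k = i then (\<Sum>j<n. cnj (y $ j) * Qgram a k j) else 0)"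
    unfolding Qform_def by (intro sum.cong) (auto simp: unit_vec_def)
  then show ?thesis using assms by simp
qed

lemma Qform_unit_vec_right:
  assumes "j < n"
  shows "Qform n a x (unit_vec n j) = (\<Sum>i<n. x $ i * Qgram a i j)"
proof -
  have "Qform n a x (unit_vec n j) = (\<Sum>i<n. \<Sum>k<n. if k = j then x $ i * Qgram a i k else 0)"
    unfolding Qform_def by (intro sum.cong) (auto simp: unit_vec_def)
  then show ?thesis using assms by simp
qed

lemma Qform_unit_vec_self:
  assumes "i < n"
  shows "Qform n a (unit_vec n i) (unit_vec n i) = 1"
proof -
  have "Qform n a (unit_vec n i) (unit_vec n i) = (\<Sum>j<n. if j = i then 1 else 0)"
    unfolding Qform_unit_vec_left[OF assms] by (intro sum.cong) (auto simp: unit_vec_def)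
  then show ?thesis using assms by simp
qed

lemma Qform_expand_right:
  assumes "y \<in> carrier_vec n"
  shows "Qform n a x y = (\<Sum>j<n. cnj (y $ j) * Qform n a x (unit_vec n j))"
proof -
  have "(\<Sum>j<n. cnj (y $ j) * Qform n a x (unit_vec n j)) = (\<Sum>j<n. \<Sum>i<n. x $ i * cnj (y $ j) * Qgram a i j)"
    by (simp add: Qform_unit_vec_right sum_distrib_left ac_simps)
  also have "\<dots> = Qform n a x y" unfolding Qform_def by (rule sum.swap)
  finally show ?thesis by simp
qed

section \<open>The root of unity \<open>\<zeta>\<close> and the generators \<open>L\<^sub>q\<close>\<close>

lemma cnj_zeta_mult_zeta: "cnj (zeta \<alpha>) * zeta \<alpha> = 1"
  unfolding zeta_def by (simp add: complex_eq_iff flip: power2_eq_square)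

lemma zeta_pow_eq_1:
  assumes "real n * \<alpha> \<in> \<int>"
  shows "zeta \<alpha> ^ n = 1"
proof -
  obtain k where k: "real n * \<alpha> = of_int k" using assms Ints_cases by blast
  have "zeta \<alpha> ^ n = cis (real n * (- 2 * pi * \<alpha>))" unfolding zeta_def DeMoivre by simp
  also have "real n * (- 2 * pi * \<alpha>) = 2 * pi * real_of_int (- k)" using k by (simp add: algebra_simps)
  also have "cis (2 * pi * real_of_int (- k)) = 1" by (rule cis_multiple_2pi) simp
  finally show ?thesis .
qed

locale small_angle =
  fixes \<alpha> :: real
  assumes \<alpha>_pos: "0 < \<alpha>" and \<alpha>_less_half: "\<alpha> < 1/2"
begin

abbreviation "z \<equiv> zeta \<alpha>"

lemma Im_zeta_neg: "Im z < 0"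
proof -
  have "0 < 2 * pi * \<alpha>" "2 * pi * \<alpha> < pi" using \<alpha>_pos \<alpha>_less_half by auto
  then have "sin (2 * pi * \<alpha>) > 0" by (intro sin_gt_zero)
  then show ?thesis unfolding zeta_def by simp
qed

lemma zeta_neq: "z \<noteq> 0" "cnj z \<noteq> 1" "1 + z \<noteq> 0" "1 + cnj z \<noteq> 0"
  using Im_zeta_neg by (auto simp: complex_eq_iff)

lemma Qgram_scaled:
  "(1 + z) * Qgram \<alpha> i k = 1 + (if i < k then z - 1 else 0) + (if i = k then z else 0)"
proof -
  have "(1 + z) * inverse (1 + cnj z) = z"
  proof -
    have "1 + z = z * (1 + cnj z)" using cnj_zeta_mult_zeta by (simp add: algebra_simps)
    then show ?thesis using zeta_neq by (simp add: field_simps)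
  qed
  then show ?thesis unfolding Qgram_def using zeta_neq by (auto simp: complex_cnj_inverse)
qed

lemma Qform_unit_vec_scaled:
  assumes "x \<in> carrier_vec n" "k < n"
  shows "(1 + z) * Qform n \<alpha> x (unit_vec n k) = (\<Sum>i<n. x $ i) + (z - 1) * (\<Sum>i<k. x $ i) + z * x $ k"
proof -
  have "(1 + z) * Qform n \<alpha> x (unit_vec n k) = (\<Sum>i<n. x $ i * ((1 + z) * Qgram \<alpha> i k))"
    unfolding Qform_unit_vec_right[OF assms(2)] by (simp add: sum_distrib_left ac_simps)
  also have "\<dots> = (\<Sum>i<n. x $ i + (z - 1) * (if i < k then x $ i else 0) + (if i = k then z * x $ k else 0))"
    unfolding Qgram_scaled by (intro sum.cong) (auto simp: algebra_simps)
  also have "\<dots> = (\<Sum>i<n. x $ i) + (z - 1) * (\<Sum>i<n. if i < k then x $ i else 0) + z * x $ k"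
    using assms(2) by (simp add: sum.distrib sum_distrib_left)
  also have "(\<Sum>i<n. if i < k then x $ i else 0) = (\<Sum>i<k. x $ i)"
    using assms(2) by (intro sum.mono_neutral_cong_right) auto
  finally show ?thesis .
qed

lemma Qform_orth_unit_vecs_step:
  assumes x: "x \<in> carrier_vec n" and orth: "\<And>k. k < n \<Longrightarrow> Qform n \<alpha> x (unit_vec n k) = 0"
    and k: "Suc k < n"
  shows "z * x $ Suc k = x $ k"
proof -
  define T where "T = (\<Sum>i<n. x $ i)"
  define S where "S k = (\<Sum>i<k. x $ i)" for k
  have eq: "T + (z - 1) * S k + z * x $ k = 0" if "k < n" for k
    using Qform_unit_vec_scaled[OF x that] orth[OF that] unfolding T_def S_def by simp
  have e1: "T + (z - 1) * (S k + x $ k) + z * x $ Suc k = 0"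
    using eq[of "Suc k"] k unfolding S_def by simp
  have e2: "T + (z - 1) * S k + z * x $ k = 0" using eq[of k] k by simp
  have "z * x $ Suc k = (T + (z - 1) * (S k + x $ k) + z * x $ Suc k) - (T + (z - 1) * S k + z * x $ k) + x $ k"
    by (simp add: algebra_simps)
  also have "\<dots> = x $ k" unfolding e1 e2 by simp
  finally show ?thesis .
qed

lemma Qform_nondegenerate:
  assumes n\<alpha>: "real n * \<alpha> \<in> \<int>"
    and x: "x \<in> carrier_vec n" and orth: "\<And>k. k < n \<Longrightarrow> Qform n \<alpha> x (unit_vec n k) = 0"
  shows "x = 0\<^sub>v n"
proof -
  have geom: "x $ k = cnj z ^ k * x $ 0" if "k < n" for k
    using that
  proof (induction k)
    case (Suc k)
    have "x $ Suc k = (cnj z * z) * x $ Suc k" using cnj_zeta_mult_zeta by simp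
    also have "\<dots> = cnj z * (z * x $ Suc k)" by (simp only: mult.assoc)
    also have "\<dots> = cnj z * (cnj z ^ k * x $ 0)"
      using Qform_orth_unit_vecs_step[OF x orth Suc.prems] Suc by simp
    finally show ?case by (simp only: power_Suc mult.assoc)
  qed simp
  show ?thesis
  proof (cases n)
    case (Suc m)
    have "(\<Sum>i<n. x $ i) = (\<Sum>i<n. x $ 0 * cnj z ^ i)"
    proof (rule sum.cong)
      fix i assume "i \<in> {..<n}"
      then show "x $ i = x $ 0 * cnj z ^ i" using geom[of i] by (simp add: mult.commute)
    qed simp
    also have "\<dots> = x $ 0 * (\<Sum>i<n. cnj z ^ i)" by (simp only: sum_distrib_left)
    also have "(\<Sum>i<n. cnj z ^ i) = 0"
      using zeta_neq zeta_pow_eq_1[OF n\<alpha>, THEN arg_cong[where f = cnj]] by (simp add: sum_gp_strict)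
    finally have "z * x $ 0 = 0"
      using Qform_unit_vec_scaled[OF x, of 0] orth[of 0] Suc by simp
    then have "x $ 0 = 0" using zeta_neq by simp
    show ?thesis
    proof (rule eq_vecI)
      fix i assume "i < dim_vec (0\<^sub>v n)"
      then show "x $ i = 0\<^sub>v n $ i" using geom[of i] \<open>x $ 0 = 0\<close> by simp
    qed (use x in simp)
  qed (use x in auto)
qed

lemma geometric_vec_in_form_kernel:
  assumes "real (Suc n) * \<alpha> \<in> \<int>"
  shows "vec n (\<lambda>k. cnj z ^ k) \<in> form_kernel n \<alpha>"
proof -
  define cz where "cz = cnj z"
  define v where "v = vec n (\<lambda>k. cz ^ k)"
  have czz: "z * cz = 1" using cnj_zeta_mult_zeta unfolding cz_def by (simp add: mult.commute)
  have c1: "1 - cz \<noteq> 0" using zeta_neq unfolding cz_def by auto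
  have czn: "cz ^ n = z"
  proof -
    have "z * z ^ n = 1" using zeta_pow_eq_1[OF assms] by simp
    then have A: "cz ^ n * cz = 1"
      unfolding cz_def by (metis complex_cnj_mult complex_cnj_one complex_cnj_power mult.commute)
    have "cz ^ n = cz ^ n * (cz * z)" using czz by (simp add: mult.commute)
    also have "\<dots> = (cz ^ n * cz) * z" by (simp only: mult.assoc)
    finally show ?thesis using A by simp
  qed
  have S1: "(1 - cz) * (\<Sum>i<n. cz ^ i) = 1 - z" using c1 czn by (simp add: sum_gp_strict)
  have orth: "Qform n \<alpha> v (unit_vec n k) = 0" if k: "k < n" for k
  proof -
    have S2: "(1 - cz) * (\<Sum>i<k. cz ^ i) = 1 - cz ^ k" using c1 by (simp add: sum_gp_strict)
    have zk: "z * cz ^ k * cz = cz ^ k" using czz by (simp add: algebra_simps)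
    have "(1 - cz) * ((1 + z) * Qform n \<alpha> v (unit_vec n k)) =
       (1 - cz) * ((\<Sum>i<n. cz ^ i) + (z - 1) * (\<Sum>i<k. cz ^ i) + z * cz ^ k)"
      using Qform_unit_vec_scaled[of v n k] k unfolding v_def by simp
    also have "\<dots> = (1 - cz) * (\<Sum>i<n. cz ^ i) + (z - 1) * ((1 - cz) * (\<Sum>i<k. cz ^ i)) + z * cz ^ k - z * cz ^ k * cz"
      by (simp add: algebra_simps)
    also have "\<dots> = 0" unfolding S1 S2 zk by (simp add: algebra_simps)
    finally show ?thesis using c1 zeta_neq by simp
  qed
  have "Qform n \<alpha> v y = 0" if "y \<in> carrier_vec n" for y
    using orth by (simp add: Qform_expand_right[OF that])
  then show ?thesis unfolding form_kernel_def by (auto simp: v_def cz_def)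
qed

lemma Lop_carrier [simp]: "Lop n \<alpha> q \<in> carrier_mat n n"
  unfolding Lop_def by simp

lemma Lop_dims [simp]: "dim_row (Lop n \<alpha> q) = n" "dim_col (Lop n \<alpha> q) = n"
  unfolding Lop_def by simp_all

lemma Lop_mult_vec:
  assumes q: "q < n" and x: "x \<in> carrier_vec n"
  shows "Lop n \<alpha> q *\<^sub>v x = x - ((1 + z) * Qform n \<alpha> x (unit_vec n q)) \<cdot>\<^sub>v unit_vec n q"
proof (rule eq_vecI)
  fix i assume "i < dim_vec (x - ((1 + z) * Qform n \<alpha> x (unit_vec n q)) \<cdot>\<^sub>v unit_vec n q)"
  then have i: "i < n" by simp
  have entry: "Lop n \<alpha> q $$ (i,j) = (if i = j then 1 else 0) - (if i = q then (1 + z) * Qgram \<alpha> j q else 0)"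
    if "j < n" for j
    using i that Qgram_scaled[of j q] unfolding Lop_def by (auto simp: algebra_simps)
  have "(Lop n \<alpha> q *\<^sub>v x) $ i = (\<Sum>j<n. Lop n \<alpha> q $$ (i,j) * x $ j)"
    using i x by (simp add: row_def scalar_prod_def atLeast0LessThan)
  also have "\<dots> = (\<Sum>j<n. (if i = j then x $ j else 0) - (if i = q then (1 + z) * (x $ j * Qgram \<alpha> j q) else 0))"
    by (intro sum.cong) (auto simp: entry algebra_simps)
  also have "\<dots> = (x - ((1 + z) * Qform n \<alpha> x (unit_vec n q)) \<cdot>\<^sub>v unit_vec n q) $ i"
    using i x unfolding sum_subtractf Qform_unit_vec_right[OF q] by (simp add: sum_distrib_left unit_vec_def)
  finally show "(Lop n \<alpha> q *\<^sub>v x) $ i = (x - ((1 + z) * Qform n \<alpha> x (unit_vec n q)) \<cdot>\<^sub>v unit_vec n q) $ i" .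
qed (use x in \<open>simp add: Lop_def\<close>)

text \<open>\<open>L\<^sub>q\<close> is the complex reflection in \<open>e\<^sub>q\<close> with eigenvalue \<open>-\<zeta>\<close>; it is unitary because
  \<open>|1 + \<zeta>|\<^sup>2 = 2 Re (1 + \<zeta>)\<close>.\<close>
lemma Lop_preserves_form:
  assumes q: "q < n" and x: "x \<in> carrier_vec n" and y: "y \<in> carrier_vec n"
  shows "Qform n \<alpha> (Lop n \<alpha> q *\<^sub>v x) (Lop n \<alpha> q *\<^sub>v y) = Qform n \<alpha> x y"
proof -
  define E where "E = (unit_vec n q :: complex vec)"
  define a where "a = 1 + z"
  define u where "u = Qform n \<alpha> x E"
  define v where "v = Qform n \<alpha> y E"
  have E: "E \<in> carrier_vec n" "Qform n \<alpha> E E = 1" unfolding E_def using Qform_unit_vec_self[OF q] by auto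
  have Ey: "Qform n \<alpha> E y = cnj v" unfolding v_def by (rule Qform_swap)
  have a0: "a + cnj a - a * cnj a = 0" unfolding a_def using cnj_zeta_mult_zeta by (simp add: algebra_simps)
  have "Qform n \<alpha> (Lop n \<alpha> q *\<^sub>v x) (Lop n \<alpha> q *\<^sub>v y) = Qform n \<alpha> (x - (a * u) \<cdot>\<^sub>v E) (y - (a * v) \<cdot>\<^sub>v E)"
    unfolding Lop_mult_vec[OF q x] Lop_mult_vec[OF q y] a_def u_def v_def E_def ..
  also have "\<dots> = Qform n \<alpha> x y - u * cnj v * (a + cnj a - a * cnj a)"
    using x y E Ey unfolding u_def by (simp add: Qform_linear algebra_simps)
  finally show ?thesis using a0 by simp
qed

end


section \<open>The stabiliser of \<open>w\<^sub>p\<close>\<close>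

locale stabiliser_setup = small_angle \<alpha> for \<alpha> +
  fixes d :: nat and p :: nat and w :: "complex vec"
  assumes d_ge_2: "2 \<le> d" and d_\<alpha>_int: "real d * \<alpha> \<in> \<int>" and p_less: "p < d"
    and w_carrier: "w \<in> carrier_vec d" and w_nonzero: "w \<noteq> 0\<^sub>v d"
    and w_span: "{y \<in> carrier_vec d. \<forall>h \<in> carrier_vec d. h $ p = 0 \<longrightarrow> Qform d \<alpha> y h = 0}
                 = {c \<cdot>\<^sub>v w | c. True}"
begin

abbreviation "Q \<equiv> Qform d \<alpha>"
abbreviation "Q' \<equiv> Qform (d-1) \<alpha>"
abbreviation e where "e i \<equiv> unit_vec d i"

definition vec_del :: "complex vec \<Rightarrow> complex vec" where
  "vec_del x = vec (d-1) (\<lambda>i. x $ insert_index p i)"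

definition vec_ins :: "complex vec \<Rightarrow> complex vec" where
  "vec_ins x = vec d (\<lambda>i. if i = p then 0 else x $ delete_index p i)"

lemma vec_del_carrier [simp]:
  "vec_del x \<in> carrier_vec (d-1)" "vec_del x \<in> carrier_vec (d - Suc 0)" "dim_vec (vec_del x) = d - 1"
  unfolding vec_del_def by simp_all

lemma vec_ins_carrier [simp]: "vec_ins x \<in> carrier_vec d" "dim_vec (vec_ins x) = d"
  unfolding vec_ins_def by simp_all

lemma vec_ins_p [simp]: "vec_ins x $ p = 0"
  unfolding vec_ins_def using p_less by simp

lemma insert_index_less: "i < d - 1 \<Longrightarrow> insert_index p i < d"
  using p_less unfolding insert_index_def by auto

lemma delete_index_less: "i < d \<Longrightarrow> i \<noteq> p \<Longrightarrow> delete_index p i < d - 1"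
  using p_less unfolding delete_index_def by auto

lemma insert_index_neq [simp]: "insert_index p i \<noteq> p"
  unfolding insert_index_def by auto

lemma vec_del_index [simp]: "i < d - 1 \<Longrightarrow> vec_del x $ i = x $ insert_index p i"
  unfolding vec_del_def by simp

lemma vec_del_vec_ins [simp]: "x \<in> carrier_vec (d-1) \<Longrightarrow> vec_del (vec_ins x) = x"
  unfolding vec_del_def vec_ins_def by (intro eq_vecI) (auto simp: insert_index_less)

lemma vec_decomp: "x \<in> carrier_vec d \<Longrightarrow> x = vec_ins (vec_del x) + x $ p \<cdot>\<^sub>v e p"
proof (rule eq_vecI)
  fix i assume "x \<in> carrier_vec d" "i < dim_vec (vec_ins (vec_del x) + x $ p \<cdot>\<^sub>v e p)"
  then show "x $ i = (vec_ins (vec_del x) + x $ p \<cdot>\<^sub>v e p) $ i"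
    using delete_index_less[of i] insert_delete_index[of i p] unfolding vec_ins_def
    by (cases "i = p") (auto simp: unit_vec_def)
qed simp

lemma vec_ins_vec_del: "x \<in> carrier_vec d \<Longrightarrow> x $ p = 0 \<Longrightarrow> vec_ins (vec_del x) = x"
proof (rule eq_vecI)
  fix i assume "x \<in> carrier_vec d" "x $ p = 0" "i < dim_vec x"
  then show "vec_ins (vec_del x) $ i = x $ i"
    unfolding vec_ins_def vec_del_def using delete_index_less[of i] insert_delete_index[of i p]
    by (cases "i = p") auto
qed (auto simp: vec_ins_def)

lemma Qform_vec_del:
  assumes "x \<in> carrier_vec d" "y \<in> carrier_vec d" "x $ p = 0" "y $ p = 0"
  shows "Q x y = Q' (vec_del x) (vec_del y)"
proof -
  have "Q x y = (\<Sum>j<d. x $ p * cnj (y $ j) * Qgram \<alpha> p j) +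
      (\<Sum>i<d-1. \<Sum>j<d. x $ insert_index p i * cnj (y $ j) * Qgram \<alpha> (insert_index p i) j)"
    unfolding Qform_def by (rule sum_lessThan_insert_index[OF p_less])
  also have "\<dots> = (\<Sum>i<d-1. \<Sum>j<d. x $ insert_index p i * cnj (y $ j) * Qgram \<alpha> (insert_index p i) j)"
    using assms by simp
  also have "\<dots> = (\<Sum>i<d-1. \<Sum>j<d-1. x $ insert_index p i * cnj (y $ insert_index p j)
       * Qgram \<alpha> (insert_index p i) (insert_index p j))"
  proof (rule sum.cong[OF refl])
    fix i
    show "(\<Sum>j<d. x $ insert_index p i * cnj (y $ j) * Qgram \<alpha> (insert_index p i) j) =
      (\<Sum>j<d-1. x $ insert_index p i * cnj (y $ insert_index p j) * Qgram \<alpha> (insert_index p i) (insert_index p j))"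
      using sum_lessThan_insert_index[OF p_less, of "\<lambda>j. x $ insert_index p i * cnj (y $ j) * Qgram \<alpha> (insert_index p i) j"] assms
      by simp
  qed
  also have "\<dots> = Q' (vec_del x) (vec_del y)"
    unfolding Qform_def by simp
  finally show ?thesis .
qed

lemma Qform_vec_ins:
  "x \<in> carrier_vec (d-1) \<Longrightarrow> y \<in> carrier_vec (d-1) \<Longrightarrow> Q (vec_ins x) (vec_ins y) = Q' x y"
  using Qform_vec_del[of "vec_ins x" "vec_ins y"] by simp

definition \<beta> :: complex where "\<beta> = Q (e p) w"

lemma Qform_w_orth: "h \<in> carrier_vec d \<Longrightarrow> h $ p = 0 \<Longrightarrow> Q w h = 0"
proof -
  have "w \<in> {c \<cdot>\<^sub>v w | c. True}" using w_carrier by (auto intro: exI[of _ 1])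
  then show "h \<in> carrier_vec d \<Longrightarrow> h $ p = 0 \<Longrightarrow> Q w h = 0" unfolding w_span[symmetric] by auto
qed

lemma Qform_right_w: assumes x: "x \<in> carrier_vec d" shows "Q x w = x $ p * \<beta>"
proof -
  have "x = (x - x $ p \<cdot>\<^sub>v e p) + x $ p \<cdot>\<^sub>v e p" using x by (intro eq_vecI) auto
  then have "Q x w = Q (x - x $ p \<cdot>\<^sub>v e p) w + Q (x $ p \<cdot>\<^sub>v e p) w"
    using x Qform_add_left by (metis minus_carrier_vec smult_carrier_vec unit_vec_carrier)
  also have "Q (x - x $ p \<cdot>\<^sub>v e p) w = cnj (Q w (x - x $ p \<cdot>\<^sub>v e p))" by (rule Qform_swap)
  also have "Q w (x - x $ p \<cdot>\<^sub>v e p) = 0" using x p_less by (intro Qform_w_orth) auto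
  also have "Q (x $ p \<cdot>\<^sub>v e p) w = x $ p * \<beta>" unfolding \<beta>_def by (simp add: Qform_smult_left)
  finally show ?thesis by simp
qed

lemma Qform_left_w: "x \<in> carrier_vec d \<Longrightarrow> Q w x = cnj (x $ p * \<beta>)"
  using Qform_right_w Qform_swap by metis

text \<open>The lift of the kernel of \<open>Q'\<close> is \<open>Q\<close>-orthogonal to \<open>H\<^sub>p\<close>, so it spans the line of \<open>w\<close>; in
  particular \<open>w\<close> lies in \<open>H\<^sub>p\<close> and is isotropic.\<close>
lemma w_p: "w $ p = 0"
proof -
  define v where "v = vec_ins (vec (d-1) (\<lambda>k. cnj z ^ k))"
  have "real (Suc (d - 1)) * \<alpha> \<in> \<int>" using d_\<alpha>_int d_ge_2 by (simp add: Suc_diff_1)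
  then have ker: "vec (d-1) (\<lambda>k. cnj z ^ k) \<in> form_kernel (d-1) \<alpha>"
    by (rule geometric_vec_in_form_kernel)
  have "v \<in> {y \<in> carrier_vec d. \<forall>h \<in> carrier_vec d. h $ p = 0 \<longrightarrow> Q y h = 0}"
  proof (safe)
    show "v \<in> carrier_vec d" unfolding v_def by simp
    fix h :: "complex vec" assume h: "h \<in> carrier_vec d" "h $ p = 0"
    have "Q v h = Q' (vec (d-1) (\<lambda>k. cnj z ^ k)) (vec_del h)"
      unfolding v_def using Qform_vec_del[of _ h] h by simp
    then show "Q v h = 0" using ker vec_del_carrier(1)[of h] unfolding form_kernel_def by simp
  qed
  then obtain c where c: "v = c \<cdot>\<^sub>v w" using w_span by auto
  have "v $ insert_index p 0 = 1"
    unfolding v_def vec_ins_def using d_ge_2 insert_index_less[of 0] by simp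
  then have "c \<noteq> 0" using c insert_index_less[of 0] d_ge_2 w_carrier by auto
  moreover have "v $ p = c * w $ p" using c p_less w_carrier by simp
  ultimately show ?thesis unfolding v_def by simp
qed

lemma Qform_w_w: "Q w w = 0"
  using Qform_right_w[OF w_carrier] w_p by simp

lemma \<beta>_nonzero: "\<beta> \<noteq> 0"
proof
  assume "\<beta> = 0"
  then have "Q w (e k) = 0" if "k < d" for k using Qform_left_w[of "e k"] by simp
  then show False using Qform_nondegenerate[OF d_\<alpha>_int w_carrier] w_nonzero by blast
qed

definition Stab :: "complex mat set" where
  "Stab = {g \<in> SU_Q d \<alpha>. g *\<^sub>v w = w}"

lemma StabD:
  assumes "g \<in> Stab"
  shows "g \<in> carrier_mat d d" "det g = 1" "g *\<^sub>v w = w"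
    "\<And>x y. x \<in> carrier_vec d \<Longrightarrow> y \<in> carrier_vec d \<Longrightarrow> Q (g *\<^sub>v x) (g *\<^sub>v y) = Q x y"
  using assms unfolding Stab_def SU_Q_def preserves_form_def by auto

lemma StabI:
  assumes "g \<in> carrier_mat d d" "det g = 1" "g *\<^sub>v w = w"
    "\<And>x y. x \<in> carrier_vec d \<Longrightarrow> y \<in> carrier_vec d \<Longrightarrow> Q (g *\<^sub>v x) (g *\<^sub>v y) = Q x y"
  shows "g \<in> Stab"
  using assms unfolding Stab_def SU_Q_def preserves_form_def by auto

lemma Stab_mult:
  assumes "g \<in> Stab" "h \<in> Stab"
  shows "g * h \<in> Stab"
proof -
  note G = StabD[OF assms(1)] and H = StabD[OF assms(2)]
  show ?thesis
  proof (rule StabI)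
    show "det (g * h) = 1" using det_mult[OF G(1) H(1)] G(2) H(2) by simp
    show "g * h *\<^sub>v w = w" using assoc_mult_mat_vec[OF G(1) H(1) w_carrier] G(3) H(3) by simp
    fix x y :: "complex vec" assume "x \<in> carrier_vec d" "y \<in> carrier_vec d"
    then show "Q (g * h *\<^sub>v x) (g * h *\<^sub>v y) = Q x y"
      using assoc_mult_mat_vec[OF G(1) H(1)] G(4) H(4) H(1) by simp
  qed (use G H in simp)
qed

lemma Stab_adj:
  assumes "g \<in> Stab"
  shows "adj_mat g \<in> Stab" "g * adj_mat g = 1\<^sub>m d" "adj_mat g * g = 1\<^sub>m d"
proof -
  note G = StabD[OF assms] and A = adj_mat[OF StabD(1)[OF assms]]
  show inv: "g * adj_mat g = 1\<^sub>m d" "adj_mat g * g = 1\<^sub>m d" using A G(2) by auto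
  have inv_vec: "adj_mat g *\<^sub>v (g *\<^sub>v x) = x" "g *\<^sub>v (adj_mat g *\<^sub>v x) = x" if "x \<in> carrier_vec d" for x
    using that inv A(1) G(1) by (simp_all add: assoc_mult_mat_vec[symmetric, of _ d d _ d])
  show "adj_mat g \<in> Stab"
  proof (rule StabI)
    show "det (adj_mat g) = 1" using det_mult[OF G(1) A(1)] inv G(2) by simp
    show "adj_mat g *\<^sub>v w = w" using inv_vec(1)[OF w_carrier] G(3) by simp
    fix x y :: "complex vec" assume "x \<in> carrier_vec d" "y \<in> carrier_vec d"
    then show "Q (adj_mat g *\<^sub>v x) (adj_mat g *\<^sub>v y) = Q x y"
      using G(4)[of "adj_mat g *\<^sub>v x" "adj_mat g *\<^sub>v y"] inv_vec(2) A(1) by simp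
  qed (use A in simp)
qed

definition unit_row :: "complex mat \<Rightarrow> bool" where
  "unit_row g \<longleftrightarrow> (\<forall>j<d. g $$ (p,j) = (if j = p then 1 else 0))"

text \<open>Since \<open>Q(x, w) = x\<^sub>p \<beta>\<close> with \<open>\<beta> \<noteq> 0\<close>, an isometry fixing \<open>w\<close> preserves the \<open>p\<close>-th coordinate.\<close>
lemma isometry_fixing_w_unit_row:
  assumes g: "g \<in> carrier_mat d d" and gw: "g *\<^sub>v w = w"
    and pres: "\<And>x y. x \<in> carrier_vec d \<Longrightarrow> y \<in> carrier_vec d \<Longrightarrow> Q (g *\<^sub>v x) (g *\<^sub>v y) = Q x y"
  shows "unit_row g"
  unfolding unit_row_def
proof (intro allI impI)
  fix j assume j: "j < d"
  have "(g *\<^sub>v e j) $ p * \<beta> = Q (g *\<^sub>v e j) (g *\<^sub>v w)" using Qform_right_w g j gw by simp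
  also have "\<dots> = e j $ p * \<beta>" using pres j w_carrier Qform_right_w[of "e j"] by simp
  finally have "(g *\<^sub>v e j) $ p = e j $ p" using \<beta>_nonzero by simp
  then show "g $$ (p,j) = (if j = p then 1 else 0)"
    using mult_mat_vec_unit_vec_index[OF g p_less j] p_less j by simp
qed

lemma Stab_unit_row: "g \<in> Stab \<Longrightarrow> unit_row g"
  using isometry_fixing_w_unit_row StabD by blast

lemma unit_row_one: "unit_row (1\<^sub>m d)"
  unfolding unit_row_def using p_less by auto

lemma unit_row_mult_vec_p:
  assumes "g \<in> carrier_mat d d" "unit_row g" "x \<in> carrier_vec d"
  shows "(g *\<^sub>v x) $ p = x $ p"
proof -
  have "(g *\<^sub>v x) $ p = (\<Sum>j<d. g $$ (p,j) * x $ j)"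
    using assms p_less by (simp add: row_def scalar_prod_def atLeast0LessThan)
  also have "\<dots> = (\<Sum>j<d. if j = p then x $ j else 0)"
    using assms(2) unfolding unit_row_def by (intro sum.cong) auto
  finally show ?thesis using p_less by simp
qed

lemma unit_row_det:
  assumes g: "g \<in> carrier_mat d d" and r: "unit_row g"
  shows "det g = det (mat_delete g p p)"
proof -
  have "det g = (\<Sum>j<d. g $$ (p,j) * cofactor g p j)" by (rule laplace_expansion_row[OF g p_less])
  also have "\<dots> = (\<Sum>j<d. if j = p then cofactor g p j else 0)"
    using r unfolding unit_row_def by (intro sum.cong) auto
  finally show ?thesis using p_less by (simp add: cofactor_def)
qed

lemma unit_row_mult_vec_ins:
  assumes g: "g \<in> carrier_mat d d" and r: "unit_row g" and x: "x \<in> carrier_vec (d-1)"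
  shows "g *\<^sub>v vec_ins x = vec_ins (mat_delete g p p *\<^sub>v x)"
proof (rule eq_vecI)
  fix i assume "i < dim_vec (vec_ins (mat_delete g p p *\<^sub>v x))"
  then have i: "i < d" by simp
  show "(g *\<^sub>v vec_ins x) $ i = vec_ins (mat_delete g p p *\<^sub>v x) $ i"
  proof (cases "i = p")
    case True
    then show ?thesis using unit_row_mult_vec_p[OF g r, of "vec_ins x"] by simp
  next
    case False
    have "(g *\<^sub>v vec_ins x) $ i = (\<Sum>j<d. g $$ (i,j) * vec_ins x $ j)"
      using g i by (simp add: row_def scalar_prod_def atLeast0LessThan)
    also have "\<dots> = (\<Sum>j<d-1. g $$ (i, insert_index p j) * x $ j)"
      unfolding sum_lessThan_insert_index[OF p_less] vec_ins_def
      using insert_index_less p_less by (auto intro!: sum.cong)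
    also have "\<dots> = (mat_delete g p p *\<^sub>v x) $ delete_index p i"
      using g x delete_index_less[OF i False] insert_delete_index[OF False]
      by (auto simp: row_def scalar_prod_def atLeast0LessThan mat_delete_def insert_index_def intro!: sum.cong)
    finally show ?thesis unfolding vec_ins_def using i False by simp
  qed
qed (use g in simp)

lemma mat_delete_index:
  assumes "A \<in> carrier_mat d d" "i < d - 1" "j < d - 1"
  shows "mat_delete A p p $$ (i,j) = A $$ (insert_index p i, insert_index p j)"
  using assms unfolding mat_delete_def insert_index_def by simp

lemma mat_delete_mult_unit_row:
  assumes G: "G \<in> carrier_mat d d" and H: "H \<in> carrier_mat d d" and r: "unit_row H"
  shows "mat_delete (G * H) p p = mat_delete G p p * mat_delete H p p"
proof (rule eq_matI)
  fix i j assume "i < dim_row (mat_delete G p p * mat_delete H p p)"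
    "j < dim_col (mat_delete G p p * mat_delete H p p)"
  then have i: "i < d - 1" and j: "j < d - 1" using G H by auto
  have "mat_delete (G * H) p p $$ (i,j) = (\<Sum>k<d. G $$ (insert_index p i, k) * H $$ (k, insert_index p j))"
    using mat_delete_index[of "G * H", OF _ i j] G H insert_index_less[OF i] insert_index_less[OF j]
    by (simp add: row_def col_def scalar_prod_def atLeast0LessThan)
  also have "\<dots> = (\<Sum>k<d-1. G $$ (insert_index p i, insert_index p k) * H $$ (insert_index p k, insert_index p j))"
    unfolding sum_lessThan_insert_index[OF p_less] using r insert_index_less[OF j] unfolding unit_row_def by simp
  also have "\<dots> = (mat_delete G p p * mat_delete H p p) $$ (i,j)"
    using G H i j mat_delete_index[OF G i] mat_delete_index[OF H _ j]
    by (simp add: row_def col_def scalar_prod_def atLeast0LessThan)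
  finally show "mat_delete (G * H) p p $$ (i,j) = (mat_delete G p p * mat_delete H p p) $$ (i,j)" .
qed (use G H in auto)

lemma unit_row_mult:
  assumes G: "G \<in> carrier_mat d d" and H: "H \<in> carrier_mat d d" and rG: "unit_row G"
  shows "unit_row (G * H) \<longleftrightarrow> unit_row H"
proof -
  have "(G * H) $$ (p,j) = H $$ (p,j)" if j: "j < d" for j
  proof -
    have "(G * H) $$ (p,j) = (\<Sum>k<d. G $$ (p,k) * H $$ (k,j))"
      using G H j p_less by (simp add: row_def col_def scalar_prod_def atLeast0LessThan)
    also have "\<dots> = (\<Sum>k<d. if k = p then H $$ (k,j) else 0)"
      using rG unfolding unit_row_def by (intro sum.cong) auto
    finally show ?thesis using p_less by simp
  qed
  then show ?thesis unfolding unit_row_def by auto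
qed

lemma unit_row_inverse:
  assumes G: "G \<in> carrier_mat d d" and r: "unit_row G" and det: "det G \<noteq> 0"
  shows "\<exists>H. H \<in> carrier_mat d d \<and> G * H = 1\<^sub>m d \<and> H * G = 1\<^sub>m d \<and> unit_row H"
proof -
  define H where "H = inverse (det G) \<cdot>\<^sub>m adj_mat G"
  have Hc: "H \<in> carrier_mat d d" unfolding H_def using adj_mat[OF G] by simp
  have GH: "G * H = 1\<^sub>m d" and HG: "H * G = 1\<^sub>m d"
    unfolding H_def using adj_mat[OF G] det G
    by (auto simp: mult_smult_distrib[of _ d d] mult_smult_assoc_mat[of _ d d] intro!: eq_matI)
  have "unit_row H" using unit_row_mult[OF G Hc r] GH unit_row_one by simp
  then show ?thesis using Hc GH HG by blast
qed

lemma mat_delete_one: "mat_delete (1\<^sub>m d) p p = 1\<^sub>m (d-1)"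
  unfolding mat_delete_def using insert_index_less by (intro eq_matI) (auto simp: insert_index_def)

lemma Stab_restrict_SU_star:
  assumes g: "g \<in> Stab"
  shows "mat_delete g p p \<in> SU_star (d-1) \<alpha>"
proof -
  note G = StabD[OF g] and r = Stab_unit_row[OF g]
  define h where "h = mat_delete g p p"
  have hc: "h \<in> carrier_mat (d-1) (d-1)" unfolding h_def using mat_delete_carrier[OF G(1)] .
  have hv: "vec_ins (h *\<^sub>v x) = g *\<^sub>v vec_ins x" if "x \<in> carrier_vec (d-1)" for x
    unfolding h_def using unit_row_mult_vec_ins[OF G(1) r that] by simp
  have pres: "Q' (h *\<^sub>v x) (h *\<^sub>v y) = Q' x y" if "x \<in> carrier_vec (d-1)" "y \<in> carrier_vec (d-1)" for x y
    using Qform_vec_ins[of "h *\<^sub>v x" "h *\<^sub>v y"] Qform_vec_ins[OF that] hv that hc G(4) by simp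
  have kern: "h *\<^sub>v v = v" if v: "v \<in> form_kernel (d-1) \<alpha>" for v
  proof -
    have vc: "v \<in> carrier_vec (d-1)" and vk: "\<And>y. y \<in> carrier_vec (d-1) \<Longrightarrow> Q' v y = 0"
      using v unfolding form_kernel_def by auto
    have "vec_ins v \<in> {y \<in> carrier_vec d. \<forall>h \<in> carrier_vec d. h $ p = 0 \<longrightarrow> Q y h = 0}"
      using Qform_vec_del[of "vec_ins v"] vk[OF vec_del_carrier(1)] vc by auto
    then obtain c where c: "vec_ins v = c \<cdot>\<^sub>v w" using w_span by auto
    have "vec_ins (h *\<^sub>v v) = vec_ins v" using hv[OF vc] c G(1) G(3) w_carrier by (simp add: mult_mat_vec)
    then show ?thesis using vec_del_vec_ins[OF vc] vec_del_vec_ins[OF mult_mat_vec_carrier[OF hc vc]] by metis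
  qed
  show ?thesis unfolding h_def[symmetric] SU_star_def SU_Q_def preserves_form_def
    using hc pres kern G(2) unit_row_det[OF G(1) r] unfolding h_def by auto
qed

subsection \<open>Central transvections\<close>

text \<open>The transvections \<open>x \<mapsto> x + i t Q(x, w) w\<close> form a one-parameter subgroup of the centre of \<open>Stab\<close>.\<close>
definition transv :: "real \<Rightarrow> complex mat" where
  "transv t = mat d d (\<lambda>(i,j). (if i = j then 1 else 0) + (if j = p then \<i> * of_real t * \<beta> * w $ i else 0))"

lemma transv_carrier [simp]: "transv t \<in> carrier_mat d d" "dim_row (transv t) = d" "dim_col (transv t) = d"
  unfolding transv_def by simp_all

lemma transv_mult_vec:
  assumes x: "x \<in> carrier_vec d"
  shows "transv t *\<^sub>v x = x + (\<i> * of_real t * Q x w) \<cdot>\<^sub>v w"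
proof (rule eq_vecI)
  fix i assume "i < dim_vec (x + (\<i> * of_real t * Q x w) \<cdot>\<^sub>v w)"
  then have i: "i < d" using x w_carrier by simp
  have "(transv t *\<^sub>v x) $ i = (\<Sum>j<d. ((if i = j then 1 else 0)
      + (if j = p then \<i> * of_real t * \<beta> * w $ i else 0)) * x $ j)"
    using i x unfolding transv_def by (simp add: row_def scalar_prod_def atLeast0LessThan)
  also have "\<dots> = (\<Sum>j<d. (if i = j then x $ j else 0)) + (\<Sum>j<d. if j = p then \<i> * of_real t * \<beta> * w $ i * x $ j else 0)"
    unfolding sum.distrib[symmetric] by (intro sum.cong) (auto simp: algebra_simps)
  also have "\<dots> = (x + (\<i> * of_real t * Q x w) \<cdot>\<^sub>v w) $ i"
    using i p_less x w_carrier Qform_right_w[OF x] by simp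
  finally show "(transv t *\<^sub>v x) $ i = (x + (\<i> * of_real t * Q x w) \<cdot>\<^sub>v w) $ i" .
qed (use x w_carrier in \<open>simp add: transv_def\<close>)

lemma transv_in_Stab: "transv t \<in> Stab"
proof (rule StabI)
  show "transv t *\<^sub>v w = w"
    using transv_mult_vec[OF w_carrier] Qform_w_w w_carrier by (auto intro!: eq_vecI)
  have "unit_row (transv t)" unfolding unit_row_def transv_def using w_p p_less by auto
  moreover have "mat_delete (transv t) p p = 1\<^sub>m (d-1)"
    unfolding mat_delete_def transv_def using insert_index_less
    by (intro eq_matI) (auto simp: insert_index_def)
  ultimately show "det (transv t) = 1" using unit_row_det[OF transv_carrier(1)] by simp
  fix x y :: "complex vec" assume x: "x \<in> carrier_vec d" and y: "y \<in> carrier_vec d"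
  define a where "a = \<i> * of_real t * Q x w"
  define b where "b = \<i> * of_real t * Q y w"
  have "Q (transv t *\<^sub>v x) (transv t *\<^sub>v y) = Q x y + (cnj b * Q x w + a * Q w y) + a * cnj b * Q w w"
    unfolding transv_mult_vec[OF x] transv_mult_vec[OF y] a_def[symmetric] b_def[symmetric]
    using x y w_carrier by (simp add: Qform_linear algebra_simps)
  also have "cnj b * Q x w + a * Q w y = 0" unfolding a_def b_def using Qform_swap[of d \<alpha> w y] by simp
  finally show "Q (transv t *\<^sub>v x) (transv t *\<^sub>v y) = Q x y" using Qform_w_w by simp
qed simp

lemma transv_central_vec:
  assumes "g \<in> Stab" "x \<in> carrier_vec d"
  shows "g *\<^sub>v (transv t *\<^sub>v x) = transv t *\<^sub>v (g *\<^sub>v x)"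
proof -
  note G = StabD[OF assms(1)]
  have "g *\<^sub>v (transv t *\<^sub>v x) = g *\<^sub>v x + (\<i> * of_real t * Q x w) \<cdot>\<^sub>v (g *\<^sub>v w)"
    unfolding transv_mult_vec[OF assms(2)] using G(1) assms(2) w_carrier
    by (simp add: mult_add_distrib_mat_vec mult_mat_vec)
  also have "\<dots> = g *\<^sub>v x + (\<i> * of_real t * Q (g *\<^sub>v x) w) \<cdot>\<^sub>v w"
    using G(3) G(4)[OF assms(2) w_carrier] by simp
  also have "\<dots> = transv t *\<^sub>v (g *\<^sub>v x)" using transv_mult_vec G(1) assms(2) by simp
  finally show ?thesis .
qed

lemma transv_add_vec: "x \<in> carrier_vec d \<Longrightarrow> transv s *\<^sub>v (transv t *\<^sub>v x) = transv (s + t) *\<^sub>v x"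
  using w_carrier Qform_w_w
  by (intro eq_vecI) (auto simp: transv_mult_vec Qform_linear algebra_simps)

lemma transv_add: "transv s * transv t = transv (s + t)"
  by (rule mat_eq_by_mult_vecI[of _ d d])
    (auto simp: assoc_mult_mat_vec[of _ d d _ d] transv_add_vec intro!: mult_carrier_mat[of _ d d _ d])

lemma transv_zero: "transv 0 = 1\<^sub>m d"
  unfolding transv_def by (intro eq_matI) auto

lemma transv_cancel_vec: "x \<in> carrier_vec d \<Longrightarrow> transv s *\<^sub>v (transv (-s) *\<^sub>v x) = x"
  using transv_add_vec[of x s "-s"] by (simp add: transv_zero)

text \<open>Two elements of \<open>Stab\<close> with the same columns off \<open>p\<close> differ by a transvection: their
  \<open>p\<close>-th columns differ by a vector orthogonal to \<open>H\<^sub>p\<close>, i.e. by \<open>c w\<close>, and \<open>Q(g e\<^sub>p, g e\<^sub>p) = 1\<close>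
  forces \<open>c \<in> i \<real> \<beta>\<close>.\<close>
lemma Stab_column_p_difference:
  assumes g: "g \<in> Stab" and g': "g' \<in> Stab"
    and same: "\<And>j. j < d \<Longrightarrow> j \<noteq> p \<Longrightarrow> g' *\<^sub>v e j = g *\<^sub>v e j"
  shows "\<exists>c. g' *\<^sub>v e p = g *\<^sub>v e p + c \<cdot>\<^sub>v w"
proof -
  note G = StabD[OF g] and G' = StabD[OF g'] and A = StabD[OF Stab_adj(1)[OF g]]
  define \<delta> where "\<delta> = g' *\<^sub>v e p - g *\<^sub>v e p"
  have \<delta>c: "\<delta> \<in> carrier_vec d" unfolding \<delta>_def using G(1) G'(1) by simp
  define y where "y = adj_mat g *\<^sub>v \<delta>"
  have yc: "y \<in> carrier_vec d" unfolding y_def using A(1) \<delta>c by simp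
  have gy: "g *\<^sub>v y = \<delta>" unfolding y_def
    using assoc_mult_mat_vec[OF G(1) A(1) \<delta>c, symmetric] Stab_adj(2)[OF g] \<delta>c by simp
  have Qyj: "Q y (e j) = 0" if "j < d" "j \<noteq> p" for j
  proof -
    have "Q y (e j) = Q (g *\<^sub>v y) (g *\<^sub>v e j)" using G(4) yc that by simp
    also have "\<dots> = Q (g' *\<^sub>v e p) (g' *\<^sub>v e j) - Q (g *\<^sub>v e p) (g *\<^sub>v e j)"
      unfolding gy \<delta>_def using same[OF that] G(1) G'(1) by (simp add: Qform_diff_left)
    also have "\<dots> = 0" using G(4) G'(4) p_less that by simp
    finally show ?thesis .
  qed
  have "y \<in> {y \<in> carrier_vec d. \<forall>h \<in> carrier_vec d. h $ p = 0 \<longrightarrow> Q y h = 0}"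
  proof (safe)
    fix h :: "complex vec" assume h: "h \<in> carrier_vec d" "h $ p = 0"
    have "Q y h = (\<Sum>j<d. cnj (h $ j) * Q y (e j))" by (rule Qform_expand_right[OF h(1)])
    also have "\<dots> = 0" using Qyj h(2) by (intro sum.neutral) auto
    finally show "Q y h = 0" .
  qed (rule yc)
  then obtain c where "y = c \<cdot>\<^sub>v w" using w_span by auto
  then have "\<delta> = c \<cdot>\<^sub>v w" using gy G(1) G(3) w_carrier by (simp add: mult_mat_vec)
  moreover have "g' *\<^sub>v e p = g *\<^sub>v e p + \<delta>"
    unfolding \<delta>_def using G(1) G'(1) by (intro eq_vecI) auto
  ultimately show ?thesis by blast
qed

lemma mat_eq_add_outer_column_p:
  assumes g: "g \<in> carrier_mat d d" and g': "g' \<in> carrier_mat d d" and v: "v \<in> carrier_vec d"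
    and col_p: "g' *\<^sub>v e p = g *\<^sub>v e p + v"
    and same: "\<And>i j. i < d \<Longrightarrow> j < d \<Longrightarrow> j \<noteq> p \<Longrightarrow> g' $$ (i,j) = g $$ (i,j)"
  shows "g' = g + outer v (e p)"
proof (rule eq_matI)
  fix i j assume "i < dim_row (g + outer v (e p))" "j < dim_col (g + outer v (e p))"
  then have i: "i < d" and j: "j < d" using g v by auto
  show "g' $$ (i,j) = (g + outer v (e p)) $$ (i,j)"
  proof (cases "j = p")
    case True
    then show ?thesis using arg_cong[OF col_p, of "\<lambda>v. v $ i"] i j g g' v
      by (simp add: outer_def mult_mat_vec_unit_vec_index)
  next
    case False
    then show ?thesis using i j g v same[OF i j False] by (simp add: outer_def unit_vec_def)
  qed
qed (use g g' v in auto)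

lemma Stab_eq_mult_transv:
  assumes g: "g \<in> Stab" and g': "g' \<in> Stab"
    and same: "\<And>i j. i < d \<Longrightarrow> j < d \<Longrightarrow> j \<noteq> p \<Longrightarrow> g' $$ (i,j) = g $$ (i,j)"
  shows "\<exists>t. g' = g * transv t"
proof -
  note G = StabD[OF g] and G' = StabD[OF g']
  have cols: "g' *\<^sub>v e j = g *\<^sub>v e j" if "j < d" "j \<noteq> p" for j
    using G(1) G'(1) same that by (intro eq_vecI) (auto simp: mult_mat_vec_unit_vec_index)
  obtain c where gep: "g' *\<^sub>v e p = g *\<^sub>v e p + c \<cdot>\<^sub>v w"
    using Stab_column_p_difference[OF g g' cols] by blast
  have Qgpw: "Q (g *\<^sub>v e p) w = \<beta>" using G(4)[of "e p" w] G(3) w_carrier p_less unfolding \<beta>_def by simp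
  have "1 = Q (g' *\<^sub>v e p) (g' *\<^sub>v e p)" using G'(4) Qform_unit_vec_self[OF p_less] by simp
  also have "\<dots> = Q (g *\<^sub>v e p) (g *\<^sub>v e p) + cnj c * Q (g *\<^sub>v e p) w + c * Q w (g *\<^sub>v e p) + c * cnj c * Q w w"
    unfolding gep using G(1) w_carrier by (simp add: Qform_linear algebra_simps)
  also have "Q w (g *\<^sub>v e p) = cnj \<beta>" using Qform_swap[of d \<alpha> w] Qgpw by simp
  also have "Q (g *\<^sub>v e p) (g *\<^sub>v e p) = 1" using G(4) Qform_unit_vec_self[OF p_less] by simp
  finally have "Re (c * cnj \<beta>) = 0" using Qgpw Qform_w_w by (simp add: complex_eq_iff)
  then obtain s where s: "c = \<i> * of_real s * \<beta>" using imaginary_multiple \<beta>_nonzero by blast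
  have g'_eq: "g' = g + outer (c \<cdot>\<^sub>v w) (e p)"
    using mat_eq_add_outer_column_p[OF G(1) G'(1) _ _ same] gep w_carrier by simp
  have "g' = g * transv s"
  proof (rule mat_eq_by_mult_vecI[of _ d d])
    fix x :: "complex vec" assume x: "x \<in> carrier_vec d"
    from g'_eq have "g' *\<^sub>v x = g *\<^sub>v x + outer (c \<cdot>\<^sub>v w) (e p) *\<^sub>v x"
      using G(1) w_carrier x by (simp add: add_mult_distrib_mat_vec)
    also have "outer (c \<cdot>\<^sub>v w) (e p) *\<^sub>v x = x $ p \<cdot>\<^sub>v (c \<cdot>\<^sub>v w)"
      using outer_mult_vec[of "c \<cdot>\<^sub>v w" d "e p" d x] w_carrier x p_less by simp
    also have "g *\<^sub>v x + x $ p \<cdot>\<^sub>v (c \<cdot>\<^sub>v w) = g *\<^sub>v (transv s *\<^sub>v x)"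
      unfolding transv_mult_vec[OF x] s Qform_right_w[OF x] using G(1) G(3) x w_carrier
      by (simp add: mult_add_distrib_mat_vec mult_mat_vec smult_smult_assoc ac_simps)
    also have "\<dots> = g * transv s *\<^sub>v x" using assoc_mult_mat_vec[OF G(1) transv_carrier(1) x] by simp
    finally show "g' *\<^sub>v x = g * transv s *\<^sub>v x" .
  qed (use G G' in auto)
  then show ?thesis by blast
qed

abbreviation "\<Gamma> \<equiv> gen_group d (Lop d \<alpha> ` ({..<d} - {p}))"
abbreviation "\<Gamma>' \<equiv> gen_group (d-1) (Lop (d-1) \<alpha> ` {..<d-1})"

lemma Lop_fixes_w: "q < d \<Longrightarrow> q \<noteq> p \<Longrightarrow> Lop d \<alpha> q *\<^sub>v w = w"
  using Lop_mult_vec[OF _ w_carrier, of q] Qform_w_orth[of "e q"] p_less w_carrier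
  by (auto simp: Qform_swap[of d \<alpha> w] intro!: eq_vecI)

lemma Lop_unit_row: "q \<noteq> p \<Longrightarrow> unit_row (Lop d \<alpha> q)"
  unfolding unit_row_def Lop_def using p_less by auto

lemma mat_delete_Lop:
  assumes "q < d - 1"
  shows "mat_delete (Lop d \<alpha> (insert_index p q)) p p = Lop (d-1) \<alpha> q"
proof (rule eq_matI)
  fix i j assume "i < dim_row (Lop (d - 1) \<alpha> q)" "j < dim_col (Lop (d - 1) \<alpha> q)"
  then have i: "i < d - 1" and j: "j < d - 1" by auto
  have inj: "(insert_index p i = insert_index p j) = (i = j)" "(insert_index p j = insert_index p q) = (j = q)"
    "(insert_index p i = insert_index p q) = (i = q)" "(insert_index p q < insert_index p j) = (q < j)"
    unfolding insert_index_def by auto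
  show "mat_delete (Lop d \<alpha> (insert_index p q)) p p $$ (i,j) = Lop (d-1) \<alpha> q $$ (i,j)"
    using mat_delete_index[OF Lop_carrier i j] insert_index_less[OF i] insert_index_less[OF j] i j
    unfolding Lop_def by (simp add: inj)
qed auto

lemma \<Gamma>_isometry_fixing_w:
  assumes "g \<in> \<Gamma>"
  shows "g \<in> carrier_mat d d \<and> g *\<^sub>v w = w \<and>
    (\<forall>x \<in> carrier_vec d. \<forall>y \<in> carrier_vec d. Q (g *\<^sub>v x) (g *\<^sub>v y) = Q x y)"
  using assms
proof (induction g rule: gen_group.induct)
  case gen_one then show ?case using w_carrier by simp
next
  case (gen_gen s)
  then show ?case using Lop_fixes_w Lop_preserves_form by auto
next
  case (gen_mult g h)
  then have gc: "g \<in> carrier_mat d d" and hc: "h \<in> carrier_mat d d" by auto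
  have "g * h *\<^sub>v w = w" using assoc_mult_mat_vec[OF gc hc w_carrier] gen_mult by simp
  moreover have "Q (g * h *\<^sub>v x) (g * h *\<^sub>v y) = Q x y" if "x \<in> carrier_vec d" "y \<in> carrier_vec d" for x y
    using assoc_mult_mat_vec[OF gc hc that(1)] assoc_mult_mat_vec[OF gc hc that(2)] gen_mult that hc by simp
  ultimately show ?case using gc hc by simp
next
  case (gen_inv g h)
  then have gc: "g \<in> carrier_mat d d" and hc: "h \<in> carrier_mat d d" by auto
  have hg_vec: "h *\<^sub>v (g *\<^sub>v x) = x" if "x \<in> carrier_vec d" for x
    using gen_inv that by (simp add: assoc_mult_mat_vec[OF hc gc, symmetric])
  have gh_vec: "g *\<^sub>v (h *\<^sub>v x) = x" if "x \<in> carrier_vec d" for x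
    using gen_inv that by (simp add: assoc_mult_mat_vec[OF gc hc, symmetric])
  have "h *\<^sub>v w = w" using hg_vec[OF w_carrier] gen_inv by simp
  moreover have "Q (h *\<^sub>v x) (h *\<^sub>v y) = Q x y" if "x \<in> carrier_vec d" "y \<in> carrier_vec d" for x y
    using gen_inv.IH hc that gh_vec by (metis mult_mat_vec_carrier)
  ultimately show ?case using hc by simp
qed

lemma \<Gamma>_SU_subset_Stab: "\<Gamma> \<inter> SU_Q d \<alpha> \<subseteq> Stab"
  using \<Gamma>_isometry_fixing_w unfolding Stab_def by auto

lemma \<Gamma>_SU_mult: "g \<in> \<Gamma> \<inter> SU_Q d \<alpha> \<Longrightarrow> h \<in> \<Gamma> \<inter> SU_Q d \<alpha> \<Longrightarrow> g * h \<in> \<Gamma> \<inter> SU_Q d \<alpha>"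
  using Stab_mult \<Gamma>_SU_subset_Stab gen_mult unfolding Stab_def by blast

lemma \<Gamma>_SU_adj:
  assumes "g \<in> \<Gamma> \<inter> SU_Q d \<alpha>"
  shows "adj_mat g \<in> \<Gamma> \<inter> SU_Q d \<alpha>"
proof -
  have g: "g \<in> Stab" using assms \<Gamma>_SU_subset_Stab by blast
  then have "adj_mat g \<in> \<Gamma>"
    using gen_inv[of g d _ "adj_mat g"] assms Stab_adj[OF g] StabD(1)[OF Stab_adj(1)[OF g]] by auto
  then show ?thesis using Stab_adj(1)[OF g] unfolding Stab_def by auto
qed

text \<open>Generators lift to generators (\<open>L\<^sub>q \<mapsto> L\<^bsub>q'\<^esub>\<close> with \<open>q'\<close> skipping \<open>p\<close>), hence every element of
  \<open>\<Gamma>'\<close> is the restriction of an element of \<open>\<Gamma>\<close>.\<close>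
lemma \<Gamma>'_lift:
  assumes "g \<in> \<Gamma>'"
  shows "\<exists>G \<in> \<Gamma>. unit_row G \<and> mat_delete G p p = g"
  using assms
proof (induction g rule: gen_group.induct)
  case gen_one
  show ?case using mat_delete_one unit_row_one gen_group.gen_one by blast
next
  case (gen_gen s)
  then obtain q where q: "q < d - 1" "s = Lop (d-1) \<alpha> q" by auto
  have "Lop d \<alpha> (insert_index p q) \<in> \<Gamma>"
    using insert_index_less[OF q(1)] by (intro gen_group.gen_gen) auto
  then show ?case using mat_delete_Lop[OF q(1)] Lop_unit_row[OF insert_index_neq] q(2) by blast
next
  case (gen_mult g h)
  then obtain G H where GH: "G \<in> \<Gamma>" "unit_row G" "mat_delete G p p = g"
    "H \<in> \<Gamma>" "unit_row H" "mat_delete H p p = h" by blast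
  have Gc: "G \<in> carrier_mat d d" and Hc: "H \<in> carrier_mat d d" using \<Gamma>_isometry_fixing_w GH by auto
  have "G * H \<in> \<Gamma>" using GH by (intro gen_group.gen_mult)
  moreover have "unit_row (G * H)" using unit_row_mult[OF Gc Hc GH(2)] GH(5) by simp
  moreover have "mat_delete (G * H) p p = g * h" using mat_delete_mult_unit_row[OF Gc Hc GH(5)] GH by simp
  ultimately show ?case by blast
next
  case (gen_inv g h)
  then obtain G where G: "G \<in> \<Gamma>" "unit_row G" "mat_delete G p p = g" by blast
  have Gc: "G \<in> carrier_mat d d" using \<Gamma>_isometry_fixing_w G by auto
  have gc: "g \<in> carrier_mat (d-1) (d-1)" using G(3) mat_delete_carrier[OF Gc, of p p] by simp
  note hc = gen_inv.hyps(2) and gh = gen_inv.hyps(3) and hg = gen_inv.hyps(4)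
  have "det g * det h = 1" using det_mult[OF gc hc] gh by simp
  then have "det G \<noteq> 0" using unit_row_det[OF Gc G(2)] G(3) by auto
  then obtain H where H: "H \<in> carrier_mat d d" "G * H = 1\<^sub>m d" "H * G = 1\<^sub>m d" "unit_row H"
    using unit_row_inverse[OF Gc G(2)] by blast
  have "g * mat_delete H p p = mat_delete (G * H) p p"
    using mat_delete_mult_unit_row[OF Gc H(1) H(4)] G(3) by simp
  then have "g * mat_delete H p p = 1\<^sub>m (d-1)" using H(2) mat_delete_one by simp
  then have "mat_delete H p p = h"
    using hg hc gc mat_delete_carrier[OF H(1), of p p]
    by (metis assoc_mult_mat left_mult_one_mat right_mult_one_mat)
  then show ?case using gen_group.gen_inv[OF G(1) H(1-3)] H(4) by blast
qed

lemma \<Gamma>'_SL_lift: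
  assumes "g \<in> \<Gamma>' \<inter> SL_mat (d-1)"
  shows "\<exists>G \<in> \<Gamma> \<inter> SU_Q d \<alpha>. mat_delete G p p = g"
proof -
  obtain G where G: "G \<in> \<Gamma>" "unit_row G" "mat_delete G p p = g" using \<Gamma>'_lift assms by blast
  have "det G = 1"
    using unit_row_det[OF _ G(2)] \<Gamma>_isometry_fixing_w[OF G(1)] G(3) assms unfolding SL_mat_def by simp
  then have "G \<in> SU_Q d \<alpha>" using \<Gamma>_isometry_fixing_w[OF G(1)] unfolding SU_Q_def preserves_form_def by auto
  then show ?thesis using G by blast
qed

subsection \<open>A polynomial section of the restriction map\<close>

definition embed_mat :: "complex mat \<Rightarrow> complex mat" where
  "embed_mat B = mat d d (\<lambda>(i,j). if i = p \<and> j = p then 1 else if i = p \<or> j = p then 0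
      else B $$ (delete_index p i, delete_index p j))"

lemma embed_mat_carrier [simp]:
  "embed_mat B \<in> carrier_mat d d" "dim_row (embed_mat B) = d" "dim_col (embed_mat B) = d"
  unfolding embed_mat_def by simp_all

lemma embed_mat_mult_vec:
  assumes B: "B \<in> carrier_mat (d-1) (d-1)" and x: "x \<in> carrier_vec d"
  shows "embed_mat B *\<^sub>v x = vec_ins (B *\<^sub>v vec_del x) + x $ p \<cdot>\<^sub>v e p"
proof (rule eq_vecI)
  fix i assume "i < dim_vec (vec_ins (B *\<^sub>v vec_del x) + x $ p \<cdot>\<^sub>v e p)"
  then have i: "i < d" by simp
  have "(embed_mat B *\<^sub>v x) $ i = (\<Sum>j<d. embed_mat B $$ (i,j) * x $ j)"
    using i x by (simp add: row_def scalar_prod_def atLeast0LessThan)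
  also have "\<dots> = embed_mat B $$ (i,p) * x $ p
      + (\<Sum>j<d-1. embed_mat B $$ (i, insert_index p j) * x $ insert_index p j)"
    by (rule sum_lessThan_insert_index[OF p_less])
  also have "\<dots> = (vec_ins (B *\<^sub>v vec_del x) + x $ p \<cdot>\<^sub>v e p) $ i"
  proof (cases "i = p")
    case False
    have "(\<Sum>j<d-1. embed_mat B $$ (i, insert_index p j) * x $ insert_index p j)
        = (B *\<^sub>v vec_del x) $ delete_index p i"
      using i False insert_index_less B delete_index_less[OF i False]
      unfolding embed_mat_def by (simp add: row_def scalar_prod_def atLeast0LessThan)
    then show ?thesis using i False p_less unfolding embed_mat_def vec_ins_def by simp
  qed (use i p_less insert_index_less in \<open>simp add: embed_mat_def\<close>)
  finally show "(embed_mat B *\<^sub>v x) $ i = (vec_ins (B *\<^sub>v vec_del x) + x $ p \<cdot>\<^sub>v e p) $ i" .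
qed (use B x in auto)

lemma embed_mat_mult_vec_ins:
  assumes B: "B \<in> carrier_mat (d-1) (d-1)" and y: "y \<in> carrier_vec (d-1)"
  shows "embed_mat B *\<^sub>v vec_ins y = vec_ins (B *\<^sub>v y)"
proof -
  have "vec_ins (B *\<^sub>v y) + 0 \<cdot>\<^sub>v e p = vec_ins (B *\<^sub>v y)" by (intro eq_vecI) (auto simp: vec_ins_def)
  then show ?thesis using embed_mat_mult_vec[OF B vec_ins_carrier(1)[of y]] vec_del_vec_ins[OF y] by simp
qed

lemma mat_delete_embed_mat: "B \<in> carrier_mat (d-1) (d-1) \<Longrightarrow> mat_delete (embed_mat B) p p = B"
  unfolding mat_delete_def embed_mat_def
  by (intro eq_matI) (auto simp: insert_index_def insert_index_less delete_index_def)

definition gram_mat :: "complex mat" where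
  "gram_mat = mat d d (\<lambda>(i,j). Qgram \<alpha> i j)"

lemma gram_mat_carrier [simp]: "gram_mat \<in> carrier_mat d d" "dim_row gram_mat = d" "dim_col gram_mat = d"
  unfolding gram_mat_def by simp_all

lemma Qdual_eq_gram_mat: "y \<in> carrier_vec d \<Longrightarrow> Qdual d \<alpha> y = gram_mat *\<^sub>v vec_cnj y"
  unfolding Qdual_def gram_mat_def vec_cnj_def
  by (intro eq_vecI) (auto simp: row_def scalar_prod_def atLeast0LessThan mult.commute intro!: sum.cong)

lemma det_gram_mat_nonzero: "det gram_mat \<noteq> 0"
proof
  assume "det gram_mat = 0"
  then obtain v where v: "v \<in> carrier_vec d" "v \<noteq> 0\<^sub>v d" "gram_mat *\<^sub>v v = 0\<^sub>v d"
    using det_0_iff_vec_prod_zero[OF gram_mat_carrier(1)] by blast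
  have "Q (vec_cnj v) (e k) = 0" if "k < d" for k
  proof -
    have "Q (e k) (vec_cnj v) = 0"
      using Qform_eq_scalar_prod[of "e k"] Qdual_eq_gram_mat[of "vec_cnj v"] v that by simp
    then show ?thesis using Qform_swap[of d \<alpha> "vec_cnj v" "e k"] by simp
  qed
  then have "vec_cnj v = 0\<^sub>v d" using Qform_nondegenerate[OF d_\<alpha>_int] v(1) by simp
  then have "v = vec_cnj (0\<^sub>v d)" using vec_cnj_vec_cnj[of v] by metis
  also have "vec_cnj (0\<^sub>v d) = 0\<^sub>v d" unfolding vec_cnj_def by (intro eq_vecI) auto
  finally show False using v by simp
qed

definition gram_inv :: "complex mat" where
  "gram_inv = inverse (det gram_mat) \<cdot>\<^sub>m adj_mat gram_mat"

lemma gram_inv_carrier [simp]: "gram_inv \<in> carrier_mat d d" "dim_row gram_inv = d" "dim_col gram_inv = d"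
  unfolding gram_inv_def using adj_mat[OF gram_mat_carrier(1)] by auto

lemma gram_mat_mult_inv: "gram_mat * gram_inv = 1\<^sub>m d"
  unfolding gram_inv_def using adj_mat[OF gram_mat_carrier(1)] det_gram_mat_nonzero
  by (auto simp: mult_smult_distrib[of _ d d] intro!: eq_matI)

text \<open>The vector representing the linear form \<open>y \<mapsto> Q(e\<^sub>p, B y)\<close> (\<open>B\<close> extended by \<open>e\<^sub>p \<mapsto> e\<^sub>p\<close>).\<close>
definition pullback_ep :: "complex mat \<Rightarrow> complex vec" where
  "pullback_ep B = vec_cnj (gram_inv *\<^sub>v (transpose_mat (embed_mat B) *\<^sub>v Qdual d \<alpha> (e p)))"

lemma pullback_ep_carrier [simp]: "pullback_ep B \<in> carrier_vec d"
  unfolding pullback_ep_def vec_cnj_def carrier_vec_def by simp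

lemma Qform_pullback_ep:
  assumes y: "y \<in> carrier_vec d"
  shows "Q (pullback_ep B) y = Q (e p) (embed_mat B *\<^sub>v y)"
proof -
  define r where "r = transpose_mat (embed_mat B) *\<^sub>v Qdual d \<alpha> (e p)"
  have r: "r \<in> carrier_vec d" unfolding r_def carrier_vec_def by simp
  have "Qdual d \<alpha> (pullback_ep B) = gram_mat *\<^sub>v (gram_inv *\<^sub>v r)"
    using Qdual_eq_gram_mat[OF pullback_ep_carrier] unfolding pullback_ep_def r_def by simp
  also have "\<dots> = r"
    using assoc_mult_mat_vec[OF gram_mat_carrier(1) gram_inv_carrier(1) r, symmetric] gram_mat_mult_inv r by simp
  finally have "Qdual d \<alpha> (pullback_ep B) = r" .
  then have "Q y (pullback_ep B) = r \<bullet> y"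
    using Qform_eq_scalar_prod[OF y] comm_scalar_prod[OF y r] by simp
  also have "\<dots> = Q (embed_mat B *\<^sub>v y) (e p)" unfolding r_def
    using transpose_vec_mult_scalar[OF embed_mat_carrier(1) y Qdual_carrier(1)]
      comm_scalar_prod[OF Qdual_carrier(1) mult_mat_vec_carrier[OF embed_mat_carrier(1) y]]
      Qform_eq_scalar_prod[OF mult_mat_vec_carrier[OF embed_mat_carrier(1) y]] by simp
  finally show ?thesis using Qform_swap by metis
qed

text \<open>The multiple of the isotropic vector \<open>w\<close> that normalises a vector \<open>v\<close> with \<open>Q(v, w) = \<beta>\<close>.\<close>
definition unit_coef :: "complex vec \<Rightarrow> complex" where
  "unit_coef v = (1 - Q v v) * \<beta> / (2 * (\<beta> * cnj \<beta>))"

lemma Qform_unit_coef: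
  assumes "Q v w = \<beta>" and v: "v \<in> carrier_vec d"
  shows "Q (v + unit_coef v \<cdot>\<^sub>v w) (v + unit_coef v \<cdot>\<^sub>v w) = 1"
proof -
  define c where "c = unit_coef v"
  define N where "N = Q v v"
  have NR: "cnj N = N" unfolding N_def using Qform_swap[of d \<alpha> v v] by simp
  have cb: "c * cnj \<beta> = (1 - N) / 2"
    unfolding c_def unit_coef_def N_def[symmetric] using \<beta>_nonzero by (simp add: field_simps)
  have cb': "cnj c * \<beta> = (1 - N) / 2" using arg_cong[OF cb, of cnj] NR by simp
  have "Q (v + c \<cdot>\<^sub>v w) (v + c \<cdot>\<^sub>v w) = N + cnj c * Q v w + c * Q w v + c * cnj c * Q w w"
    unfolding N_def using v w_carrier by (simp add: Qform_linear algebra_simps)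
  also have "\<dots> = N + cnj c * \<beta> + c * cnj \<beta>" using assms Qform_swap[of d \<alpha> w v] Qform_w_w by simp
  also have "\<dots> = 1" unfolding cb cb' by (simp add: field_simps)
  finally show ?thesis unfolding c_def .
qed

definition lift_col :: "complex mat \<Rightarrow> complex vec" where
  "lift_col h = pullback_ep (adj_mat h) + unit_coef (pullback_ep (adj_mat h)) \<cdot>\<^sub>v w"

lemma lift_col_carrier [simp]: "lift_col h \<in> carrier_vec d" "dim_vec (lift_col h) = d"
  unfolding lift_col_def using w_carrier by simp_all

definition trunc_mat :: "complex mat \<Rightarrow> complex mat" where
  "trunc_mat A = mat (d-1) (d-1) (\<lambda>(i,j). A $$ (i,j))"

lemma trunc_mat_id: "A \<in> carrier_mat (d-1) (d-1) \<Longrightarrow> trunc_mat A = A"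
  unfolding trunc_mat_def by (intro eq_matI) auto

text \<open>A section of the restriction map \<open>Stab \<rightarrow> SU\<^sup>*(Q')\<close> over \<open>SU\<^sup>*(Q')\<close>, defined on all
  matrices so that it is a polynomial map; the truncation only makes it total.\<close>
definition stab_lift :: "complex mat \<Rightarrow> complex mat" where
  "stab_lift A = embed_mat (trunc_mat A) + outer (lift_col (trunc_mat A) - e p) (e p)"

lemma stab_lift_carrier [simp]:
  "stab_lift A \<in> carrier_mat d d" "dim_row (stab_lift A) = d" "dim_col (stab_lift A) = d"
  unfolding stab_lift_def by simp_all

lemma stab_lift_mult_vec:
  assumes h: "h \<in> carrier_mat (d-1) (d-1)" and x: "x \<in> carrier_vec d"
  shows "stab_lift h *\<^sub>v x = vec_ins (h *\<^sub>v vec_del x) + x $ p \<cdot>\<^sub>v lift_col h"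
proof -
  have "stab_lift h *\<^sub>v x = embed_mat h *\<^sub>v x + x $ p \<cdot>\<^sub>v (lift_col h - e p)"
    unfolding stab_lift_def trunc_mat_id[OF h] using x p_less
    by (simp add: add_mult_distrib_mat_vec[of _ d d] outer_mult_vec[of _ d _ d])
  then show ?thesis unfolding embed_mat_mult_vec[OF h x] using x p_less
    by (intro eq_vecI) (auto simp: algebra_simps)
qed

lemma mat_delete_stab_lift:
  assumes h: "h \<in> carrier_mat (d-1) (d-1)"
  shows "mat_delete (stab_lift h) p p = h"
proof -
  have "mat_delete (stab_lift h) p p = mat_delete (embed_mat h) p p"
  proof (rule eq_matI)
    fix i j assume "i < dim_row (mat_delete (embed_mat h) p p)" "j < dim_col (mat_delete (embed_mat h) p p)"
    then have i: "i < d - 1" and j: "j < d - 1" by auto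
    show "mat_delete (stab_lift h) p p $$ (i,j) = mat_delete (embed_mat h) p p $$ (i,j)"
      unfolding mat_delete_index[OF stab_lift_carrier(1) i j] mat_delete_index[OF embed_mat_carrier(1) i j]
      unfolding stab_lift_def trunc_mat_id[OF h] outer_def
      using insert_index_less[OF i] insert_index_less[OF j] by (simp add: unit_vec_def)
  qed auto
  then show ?thesis using mat_delete_embed_mat[OF h] by simp
qed

lemma SU_star_fixes_vec_del_w:
  assumes "h \<in> SU_star (d-1) \<alpha>"
  shows "h *\<^sub>v vec_del w = vec_del w"
proof -
  have "vec_del w \<in> form_kernel (d-1) \<alpha>"
    unfolding form_kernel_def
    using Qform_vec_ins[of "vec_del w"] vec_ins_vec_del[OF w_carrier w_p] Qform_w_orth by auto
  then show ?thesis using assms unfolding SU_star_def by blast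
qed

lemma Qform_lift_col:
  assumes hS: "h \<in> SU_star (d-1) \<alpha>"
  shows "Q (lift_col h) (lift_col h) = 1"
    and "\<And>y. y \<in> carrier_vec (d-1) \<Longrightarrow> Q (lift_col h) (vec_ins (h *\<^sub>v y)) = Q (e p) (vec_ins y)"
proof -
  have hc: "h \<in> carrier_mat (d-1) (d-1)" and "det h = 1"
    using hS unfolding SU_star_def SU_Q_def by auto
  note A = adj_mat[OF hc]
  have inv: "adj_mat h * h = 1\<^sub>m (d-1)" using A(3) \<open>det h = 1\<close> by auto
  define v where "v = pullback_ep (adj_mat h)"
  have Qv: "Q v (vec_ins y) = Q (e p) (vec_ins (adj_mat h *\<^sub>v y))" if "y \<in> carrier_vec (d-1)" for y
    unfolding v_def using Qform_pullback_ep[OF vec_ins_carrier(1)] embed_mat_mult_vec_ins[OF A(1) that] by simp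
  have "adj_mat h *\<^sub>v vec_del w = adj_mat h *\<^sub>v (h *\<^sub>v vec_del w)"
    using SU_star_fixes_vec_del_w[OF hS] by simp
  also have "\<dots> = vec_del w"
    using assoc_mult_mat_vec[OF A(1) hc vec_del_carrier(1), symmetric] inv by simp
  finally have adj_fix: "adj_mat h *\<^sub>v vec_del w = vec_del w" .
  have "Q v w = \<beta>"
    using Qv[OF vec_del_carrier(1)[of w]] adj_fix vec_ins_vec_del[OF w_carrier w_p] unfolding \<beta>_def by simp
  then show "Q (lift_col h) (lift_col h) = 1"
    unfolding lift_col_def v_def[symmetric] using Qform_unit_coef v_def by simp
  fix y :: "complex vec" assume y: "y \<in> carrier_vec (d-1)"
  have hy: "h *\<^sub>v y \<in> carrier_vec (d-1)" using hc y by simp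
  have "Q (lift_col h) (vec_ins (h *\<^sub>v y)) = Q v (vec_ins (h *\<^sub>v y)) + unit_coef v * Q w (vec_ins (h *\<^sub>v y))"
    unfolding lift_col_def v_def[symmetric] using w_carrier pullback_ep_carrier[of "adj_mat h"]
    by (simp add: v_def[symmetric] Qform_linear)
  also have "Q w (vec_ins (h *\<^sub>v y)) = 0" by (rule Qform_w_orth) simp_all
  also have "adj_mat h *\<^sub>v (h *\<^sub>v y) = y"
    using assoc_mult_mat_vec[OF A(1) hc y, symmetric] inv y by simp
  then have "Q v (vec_ins (h *\<^sub>v y)) = Q (e p) (vec_ins y)" using Qv[OF hy] by simp
  finally show "Q (lift_col h) (vec_ins (h *\<^sub>v y)) = Q (e p) (vec_ins y)" by simp
qed

lemma stab_lift_fixes_w: "h \<in> SU_star (d-1) \<alpha> \<Longrightarrow> stab_lift h *\<^sub>v w = w"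
  using stab_lift_mult_vec[OF _ w_carrier, of h] SU_star_fixes_vec_del_w[of h]
    vec_ins_vec_del[OF w_carrier w_p] w_p w_carrier
  by (auto simp: SU_star_def SU_Q_def intro!: eq_vecI)

lemma stab_lift_preserves_form:
  assumes hS: "h \<in> SU_star (d-1) \<alpha>" and x: "x \<in> carrier_vec d" and y: "y \<in> carrier_vec d"
  shows "Q (stab_lift h *\<^sub>v x) (stab_lift h *\<^sub>v y) = Q x y"
proof -
  have hc: "h \<in> carrier_mat (d-1) (d-1)"
    and hpres: "\<And>x y. x \<in> carrier_vec (d-1) \<Longrightarrow> y \<in> carrier_vec (d-1) \<Longrightarrow> Q' (h *\<^sub>v x) (h *\<^sub>v y) = Q' x y"
    using hS unfolding SU_star_def SU_Q_def preserves_form_def by auto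
  define u where "u = lift_col h"
  define x' where "x' = vec_del x"
  define y' where "y' = vec_del y"
  have x'c: "x' \<in> carrier_vec (d-1)" and y'c: "y' \<in> carrier_vec (d-1)" unfolding x'_def y'_def by simp_all
  have hx: "h *\<^sub>v x' \<in> carrier_vec (d-1)" and hy: "h *\<^sub>v y' \<in> carrier_vec (d-1)" using hc x'c y'c by simp_all
  have t1: "Q (vec_ins (h *\<^sub>v x')) (vec_ins (h *\<^sub>v y')) = Q (vec_ins x') (vec_ins y')"
    using Qform_vec_ins[OF hx hy] Qform_vec_ins[OF x'c y'c] hpres[OF x'c y'c] by simp
  have t2: "Q (vec_ins (h *\<^sub>v x')) u = Q (vec_ins x') (e p)"
    using Qform_lift_col(2)[OF hS x'c] Qform_swap[of d \<alpha> "vec_ins (h *\<^sub>v x')" u]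
      Qform_swap[of d \<alpha> "vec_ins x'" "e p"] unfolding u_def by simp
  have t3: "Q u (vec_ins (h *\<^sub>v y')) = Q (e p) (vec_ins y')"
    unfolding u_def using Qform_lift_col(2)[OF hS y'c] .
  have Quu: "Q u u = 1" unfolding u_def using Qform_lift_col(1)[OF hS] .
  have "Q (stab_lift h *\<^sub>v x) (stab_lift h *\<^sub>v y) = Q (vec_ins (h *\<^sub>v x') + x $ p \<cdot>\<^sub>v u) (vec_ins (h *\<^sub>v y') + y $ p \<cdot>\<^sub>v u)"
    unfolding stab_lift_mult_vec[OF hc x] stab_lift_mult_vec[OF hc y] x'_def y'_def u_def ..
  also have "\<dots> = Q (vec_ins (h *\<^sub>v x')) (vec_ins (h *\<^sub>v y')) + cnj (y $ p) * Q (vec_ins (h *\<^sub>v x')) u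
      + x $ p * Q u (vec_ins (h *\<^sub>v y')) + x $ p * cnj (y $ p) * Q u u"
    by (simp add: u_def Qform_linear algebra_simps)
  also have "\<dots> = Q (vec_ins x') (vec_ins y') + cnj (y $ p) * Q (vec_ins x') (e p)
      + x $ p * Q (e p) (vec_ins y') + x $ p * cnj (y $ p) * Q (e p) (e p)"
    unfolding t1 t2 t3 Quu Qform_unit_vec_self[OF p_less] by simp
  also have "\<dots> = Q (vec_ins x' + x $ p \<cdot>\<^sub>v e p) (vec_ins y' + y $ p \<cdot>\<^sub>v e p)"
    by (simp add: Qform_linear algebra_simps)
  finally show ?thesis using vec_decomp[OF x] vec_decomp[OF y] unfolding x'_def y'_def by simp
qed

lemma stab_lift_in_Stab:
  assumes hS: "h \<in> SU_star (d-1) \<alpha>"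
  shows "stab_lift h \<in> Stab"
proof -
  have hc: "h \<in> carrier_mat (d-1) (d-1)" and "det h = 1"
    using hS unfolding SU_star_def SU_Q_def by auto
  note sw = stab_lift_fixes_w[OF hS] and pres = stab_lift_preserves_form[OF hS]
  have "unit_row (stab_lift h)" by (rule isometry_fixing_w_unit_row[OF stab_lift_carrier(1) sw pres])
  then have "det (stab_lift h) = 1"
    using unit_row_det[OF stab_lift_carrier(1)] mat_delete_stab_lift[OF hc] \<open>det h = 1\<close> by simp
  then show ?thesis using sw pres by (intro StabI) simp_all
qed

lemma unit_row_eq_off_column_p:
  assumes G: "G \<in> carrier_mat d d" and G': "G' \<in> carrier_mat d d"
    and r: "unit_row G" and r': "unit_row G'" and md: "mat_delete G p p = mat_delete G' p p"
    and ij: "i < d" "j < d" "j \<noteq> p"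
  shows "G' $$ (i,j) = G $$ (i,j)"
proof (cases "i = p")
  case True then show ?thesis using r r' ij unfolding unit_row_def by simp
next
  case False
  have di: "delete_index p i < d - 1" and dj: "delete_index p j < d - 1"
    using delete_index_less ij False by auto
  show ?thesis
    using mat_delete_index[OF G di dj] mat_delete_index[OF G' di dj] md
      insert_delete_index[OF False] insert_delete_index[OF ij(3)] by simp
qed

lemma Stab_eq_stab_lift_mult_transv:
  assumes g: "g \<in> Stab"
  shows "\<exists>t. g = stab_lift (mat_delete g p p) * transv t"
proof -
  define h where "h = mat_delete g p p"
  have hS: "h \<in> SU_star (d-1) \<alpha>" unfolding h_def by (rule Stab_restrict_SU_star[OF g])
  then have hc: "h \<in> carrier_mat (d-1) (d-1)" unfolding SU_star_def SU_Q_def by simp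
  note L = stab_lift_in_Stab[OF hS]
  show ?thesis unfolding h_def[symmetric]
    using unit_row_eq_off_column_p[OF StabD(1)[OF L] StabD(1)[OF g] Stab_unit_row[OF L] Stab_unit_row[OF g]]
      mat_delete_stab_lift[OF hc]
    by (intro Stab_eq_mult_transv[OF L g]) (simp add: h_def)
qed

lemma poly_mat_fun_trunc_mat: "poly_mat_fun (d-1) (d-1) trunc_mat"
  unfolding poly_mat_fun_def trunc_mat_def by (auto simp del: One_nat_def)

lemma complex_poly_fun_embed_mat:
  assumes M: "poly_mat_fun n (d-1) M" and "l < d" "k < d"
  shows "complex_poly_fun n (\<lambda>A. embed_mat (M A) $$ (l,k))"
proof (cases "l = p \<or> k = p")
  case True
  then have "(\<lambda>A. embed_mat (M A) $$ (l,k)) = (\<lambda>A. if l = p \<and> k = p then 1 else 0)"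
    unfolding embed_mat_def using assms(2,3) by auto
  then show ?thesis using complex_poly_fun_const by metis
next
  case False
  then have "(\<lambda>A. embed_mat (M A) $$ (l,k)) = (\<lambda>A. M A $$ (delete_index p l, delete_index p k))"
    unfolding embed_mat_def using assms(2,3) by auto
  then show ?thesis
    using poly_mat_funD(2)[OF M delete_index_less[OF assms(2)] delete_index_less[OF assms(3)]] False by simp
qed

lemma complex_poly_fun_pullback_ep:
  assumes M: "poly_mat_fun n (d-1) M" and i: "i < d"
  shows "complex_poly_fun n (\<lambda>A. pullback_ep (M A) $ i)"
proof -
  have eq: "(\<lambda>A. pullback_ep (M A) $ i) = (\<lambda>A. cnj (\<Sum>k\<in>{0..<d}. gram_inv $$ (i,k) *
      (\<Sum>l\<in>{0..<d}. embed_mat (M A) $$ (l,k) * Qdual d \<alpha> (e p) $ l)))"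
    unfolding pullback_ep_def vec_cnj_def using i by (intro ext) (simp add: row_def col_def scalar_prod_def)
  show ?thesis unfolding eq
    by (intro complex_poly_fun_cnj complex_poly_fun_sum complex_poly_fun_mult complex_poly_fun_const
        complex_poly_fun_embed_mat[OF M]) auto
qed

lemma complex_poly_fun_unit_coef:
  assumes "\<And>i. i < d \<Longrightarrow> complex_poly_fun n (\<lambda>A. V A $ i)"
  shows "complex_poly_fun n (\<lambda>A. unit_coef (V A))"
proof -
  have eq: "(\<lambda>A. unit_coef (V A)) = (\<lambda>A. (\<beta> / (2 * (\<beta> * cnj \<beta>))) *
      (1 - (\<Sum>i<d. \<Sum>j<d. V A $ i * cnj (V A $ j) * Qgram \<alpha> i j)))"
    unfolding unit_coef_def Qform_def by (intro ext) (simp add: field_simps)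
  show ?thesis unfolding eq using assms
    by (intro complex_poly_fun_cmult complex_poly_fun_diff complex_poly_fun_const complex_poly_fun_sum
        complex_poly_fun_mult complex_poly_fun_cnj) auto
qed

lemma poly_mat_fun_stab_lift: "poly_mat_fun (d-1) d stab_lift"
  unfolding poly_mat_fun_def
proof (intro conjI allI impI)
  fix i j assume i: "i < d" and j: "j < d"
  note T = poly_mat_fun_adj[OF poly_mat_fun_trunc_mat]
  have eq: "(\<lambda>A. stab_lift A $$ (i,j)) = (\<lambda>A. embed_mat (trunc_mat A) $$ (i,j) +
      (pullback_ep (adj_mat (trunc_mat A)) $ i + unit_coef (pullback_ep (adj_mat (trunc_mat A))) * w $ i
       - e p $ i) * e p $ j)"
    unfolding stab_lift_def outer_def lift_col_def using i j w_carrier by (intro ext) simp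
  show "complex_poly_fun (d-1) (\<lambda>A. stab_lift A $$ (i,j))" unfolding eq
    by (intro complex_poly_fun_add complex_poly_fun_mult complex_poly_fun_diff complex_poly_fun_const
        complex_poly_fun_embed_mat[OF poly_mat_fun_trunc_mat i j] complex_poly_fun_pullback_ep[OF T i]
        complex_poly_fun_unit_coef[OF complex_poly_fun_pullback_ep[OF T]])
qed simp

subsection \<open>Eichler transformations and commutators\<close>

text \<open>Eichler transformations \<open>x \<mapsto> x + s Q(x,w) u - (s Q(x,u) + s\<^sup>2 Q(u,u)/2 Q(x,w)) w\<close> for
  \<open>u \<in> H\<^sub>p\<close>; their commutators are the transvections.\<close>
definition eichler :: "complex vec \<Rightarrow> complex \<Rightarrow> complex mat" where
  "eichler u s = 1\<^sub>m d + outer (s \<cdot>\<^sub>v u - (s\<^sup>2 * (Q u u / 2)) \<cdot>\<^sub>v w) (Qdual d \<alpha> w)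
     + outer w ((- s) \<cdot>\<^sub>v Qdual d \<alpha> u)"

lemma eichler_carrier [simp]: "u \<in> carrier_vec d \<Longrightarrow> eichler u s \<in> carrier_mat d d"
  unfolding eichler_def using w_carrier by simp

lemma eichler_mult_vec:
  assumes u: "u \<in> carrier_vec d" and x: "x \<in> carrier_vec d"
  shows "eichler u s *\<^sub>v x = x + (s * Q x w) \<cdot>\<^sub>v u + (- s * Q x u - s\<^sup>2 * (Q u u / 2) * Q x w) \<cdot>\<^sub>v w"
proof -
  have dual: "Qdual d \<alpha> y \<bullet> x = Q x y" for y
    using Qform_eq_scalar_prod[OF x] comm_scalar_prod[OF Qdual_carrier(1) x] by simp
  have "eichler u s *\<^sub>v x = x + outer (s \<cdot>\<^sub>v u - (s\<^sup>2 * (Q u u / 2)) \<cdot>\<^sub>v w) (Qdual d \<alpha> w) *\<^sub>v x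
      + outer w ((- s) \<cdot>\<^sub>v Qdual d \<alpha> u) *\<^sub>v x"
    unfolding eichler_def using u x w_carrier by (simp add: add_mult_distrib_mat_vec[of _ d d])
  also have "outer (s \<cdot>\<^sub>v u - (s\<^sup>2 * (Q u u / 2)) \<cdot>\<^sub>v w) (Qdual d \<alpha> w) *\<^sub>v x
      = Q x w \<cdot>\<^sub>v (s \<cdot>\<^sub>v u - (s\<^sup>2 * (Q u u / 2)) \<cdot>\<^sub>v w)"
    using outer_mult_vec[of _ d _ d x] u w_carrier x dual by simp
  also have "outer w ((- s) \<cdot>\<^sub>v Qdual d \<alpha> u) *\<^sub>v x = (- s * Q x u) \<cdot>\<^sub>v w"
    using outer_mult_vec[OF w_carrier _ x, of "(- s) \<cdot>\<^sub>v Qdual d \<alpha> u"] dual[of u] x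
    by (simp add: smult_scalar_prod_distrib[of _ d])
  finally show ?thesis using u x w_carrier by (intro eq_vecI) (auto simp: algebra_simps)
qed

lemma Qform_H_p_w: "u \<in> carrier_vec d \<Longrightarrow> u $ p = 0 \<Longrightarrow> Q u w = 0"
  using Qform_right_w by simp

lemma Qform_w_H_p: "u \<in> carrier_vec d \<Longrightarrow> u $ p = 0 \<Longrightarrow> Q w u = 0"
  using Qform_left_w by simp

lemma eichler_inverse:
  assumes u: "u \<in> carrier_vec d" and up: "u $ p = 0"
  shows "eichler u s * eichler u (-s) = 1\<^sub>m d"
proof (rule mat_eq_by_mult_vecI[of _ d d])
  fix x :: "complex vec" assume x: "x \<in> carrier_vec d"
  define q where "q = Q u u"
  define y where "y = eichler u (-s) *\<^sub>v x"
  have yc: "y \<in> carrier_vec d" unfolding y_def using mult_mat_vec_carrier[OF eichler_carrier[OF u] x] .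
  have yeq: "y = x + (- s * Q x w) \<cdot>\<^sub>v u + (s * Q x u - s\<^sup>2 * (q / 2) * Q x w) \<cdot>\<^sub>v w"
    unfolding y_def q_def eichler_mult_vec[OF u x] by simp
  have Qyw: "Q y w = Q x w" unfolding yeq using x u w_carrier Qform_H_p_w[OF u up] Qform_w_w
    by (simp add: Qform_linear)
  have Qyu: "Q y u = Q x u - s * q * Q x w" unfolding yeq q_def using x u w_carrier Qform_w_H_p[OF u up]
    by (simp add: Qform_linear)
  have "eichler u s * eichler u (-s) *\<^sub>v x = eichler u s *\<^sub>v y"
    unfolding y_def using assoc_mult_mat_vec[OF eichler_carrier[OF u] eichler_carrier[OF u] x] .
  also have "\<dots> = x" unfolding eichler_mult_vec[OF u yc] q_def[symmetric] Qyw Qyu unfolding yeq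
    using x u w_carrier by (intro eq_vecI) (auto simp: algebra_simps power2_eq_square)
  finally show "eichler u s * eichler u (-s) *\<^sub>v x = 1\<^sub>m d *\<^sub>v x" using x by simp
qed (use u in \<open>auto intro!: mult_carrier_mat[of _ d d _ d]\<close>)

lemma det_eichler:
  assumes u: "u \<in> carrier_vec d" and up: "u $ p = 0"
  shows "det (eichler u s) = 1"
proof (rule det_poly_family_eq_1[where M = "eichler u"])
  show "eichler u 0 = 1\<^sub>m d" unfolding eichler_def using u w_carrier by (intro eq_matI) (auto simp: outer_def)
  fix i j assume i: "i < d" and j: "j < d"
  have eq: "(\<lambda>s. eichler u s $$ (i,j)) = (\<lambda>s. (if i = j then 1 else 0)
     + s * (u $ i * Qdual d \<alpha> w $ j - w $ i * Qdual d \<alpha> u $ j) + s * s * (- (Q u u / 2) * w $ i * Qdual d \<alpha> w $ j))"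
    unfolding eichler_def outer_def using u w_carrier i j by (intro ext) (simp add: algebra_simps power2_eq_square)
  show "poly_function (\<lambda>s. eichler u s $$ (i,j))" unfolding eq
    by (intro poly_function_add poly_function_mult poly_function_const poly_function_id)
qed (use eichler_inverse[OF u up] u in auto)

lemma eichler_preserves_form:
  assumes u: "u \<in> carrier_vec d" and up: "u $ p = 0"
    and x: "x \<in> carrier_vec d" and y: "y \<in> carrier_vec d"
  shows "Q (eichler u 1 *\<^sub>v x) (eichler u 1 *\<^sub>v y) = Q x y"
proof -
  define q where "q = Q u u"
  have qr: "cnj q = q" unfolding q_def using Qform_swap[of d \<alpha> u u] by simp
  define a where "a = Q x w"
  define b where "b = Q x u"
  define a' where "a' = Q y w"
  define b' where "b' = Q y u"
  have uy: "Q u y = cnj b'" unfolding b'_def by (rule Qform_swap)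
  have wy: "Q w y = cnj a'" unfolding a'_def by (rule Qform_swap)
  have "Q (eichler u 1 *\<^sub>v x) (eichler u 1 *\<^sub>v y)
      = Q (x + a \<cdot>\<^sub>v u + (- b - q / 2 * a) \<cdot>\<^sub>v w) (y + a' \<cdot>\<^sub>v u + (- b' - q / 2 * a') \<cdot>\<^sub>v w)"
    unfolding eichler_mult_vec[OF u x] eichler_mult_vec[OF u y] a_def b_def a'_def b'_def q_def by simp
  also have "\<dots> = Q x y + cnj a' * b + cnj (- b' - q / 2 * a') * a + a * cnj b' + a * cnj a' * q
     + (- b - q / 2 * a) * cnj a'"
    using x y u w_carrier Qform_H_p_w[OF u up] Qform_w_H_p[OF u up] Qform_w_w uy wy qr
    by (simp add: Qform_linear algebra_simps a_def[symmetric] b_def[symmetric] q_def[symmetric])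
  also have "\<dots> = Q x y" using qr by (simp add: algebra_simps)
  finally show ?thesis .
qed

lemma eichler_in_Stab:
  assumes u: "u \<in> carrier_vec d" and up: "u $ p = 0"
  shows "eichler u 1 \<in> Stab"
proof (rule StabI)
  show "eichler u 1 *\<^sub>v w = w"
    using eichler_mult_vec[OF u w_carrier, of 1] w_carrier u Qform_w_w Qform_w_H_p[OF u up]
    by (auto intro!: eq_vecI)
qed (use u up det_eichler eichler_preserves_form in auto)

lemma eichler_commutator_vec:
  assumes u: "u \<in> carrier_vec d" and up: "u $ p = 0" and v: "v \<in> carrier_vec d" and vp: "v $ p = 0"
    and x: "x \<in> carrier_vec d"
  shows "eichler u 1 *\<^sub>v (eichler v 1 *\<^sub>v x) = transv (2 * Im (Q u v)) *\<^sub>v (eichler v 1 *\<^sub>v (eichler u 1 *\<^sub>v x))"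
proof -
  have compose: "eichler a 1 *\<^sub>v (eichler b 1 *\<^sub>v x) = x + Q x w \<cdot>\<^sub>v b + Q x w \<cdot>\<^sub>v a
     + (- Q x b - Q b b / 2 * Q x w - Q x a - Q x w * Q b a - Q a a / 2 * Q x w) \<cdot>\<^sub>v w"
    if a: "a \<in> carrier_vec d" "a $ p = 0" and b: "b \<in> carrier_vec d" "b $ p = 0" for a b
  proof -
    have B: "eichler b 1 *\<^sub>v x = x + Q x w \<cdot>\<^sub>v b + (- Q x b - Q b b / 2 * Q x w) \<cdot>\<^sub>v w"
      using eichler_mult_vec[OF b(1) x, of 1] by simp
    have Bc: "eichler b 1 *\<^sub>v x \<in> carrier_vec d" using mult_mat_vec_carrier[OF eichler_carrier[OF b(1)] x] .
    have "Q (eichler b 1 *\<^sub>v x) w = Q x w"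
      unfolding B using x b w_carrier Qform_H_p_w[OF b] Qform_w_w by (simp add: Qform_linear)
    moreover have "Q (eichler b 1 *\<^sub>v x) a = Q x a + Q x w * Q b a"
      unfolding B using x a b w_carrier Qform_w_H_p[OF a] by (simp add: Qform_linear)
    ultimately show ?thesis
      using eichler_mult_vec[OF a(1) Bc, of 1] unfolding B using x a b w_carrier
      by (intro eq_vecI) (auto simp: algebra_simps)
  qed
  have Qrw: "Q (eichler v 1 *\<^sub>v (eichler u 1 *\<^sub>v x)) w = Q x w"
    unfolding compose[OF v vp u up]
    using x u v w_carrier Qform_H_p_w[OF u up] Qform_H_p_w[OF v vp] Qform_w_w by (simp add: Qform_linear)
  have im: "\<i> * of_real (2 * Im (Q u v)) = Q u v - cnj (Q u v)"
    by (simp add: complex_eq_iff)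
  show ?thesis
    unfolding transv_mult_vec[OF mult_mat_vec_carrier[OF eichler_carrier[OF v] mult_mat_vec_carrier[OF eichler_carrier[OF u] x]]] Qrw
    unfolding compose[OF u up v vp] compose[OF v vp u up] im Qform_swap[of d \<alpha> v u]
    using x u v w_carrier by (intro eq_vecI) (auto simp: algebra_simps)
qed

definition commutator :: "complex mat \<Rightarrow> complex mat \<Rightarrow> complex mat" where
  "commutator a b = a * b * adj_mat a * adj_mat b"

lemma commutator_in_Stab: "a \<in> Stab \<Longrightarrow> b \<in> Stab \<Longrightarrow> commutator a b \<in> Stab"
  unfolding commutator_def by (intro Stab_mult Stab_adj) auto

lemma commutator_mult_vec:
  assumes "a \<in> Stab" "b \<in> Stab" "x \<in> carrier_vec d"
  shows "commutator a b *\<^sub>v x = a *\<^sub>v (b *\<^sub>v (adj_mat a *\<^sub>v (adj_mat b *\<^sub>v x)))"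
proof -
  note A = StabD(1)[OF assms(1)] and B = StabD(1)[OF assms(2)]
  note A' = StabD(1)[OF Stab_adj(1)[OF assms(1)]] and B' = StabD(1)[OF Stab_adj(1)[OF assms(2)]]
  have ab: "a * b \<in> carrier_mat d d" and aba: "a * b * adj_mat a \<in> carrier_mat d d" using A B A' by auto
  show ?thesis unfolding commutator_def
    using assoc_mult_mat_vec[OF aba B' assms(3)] assoc_mult_mat_vec[OF ab A'] assoc_mult_mat_vec[OF A B]
      B' A' assms(3) by simp
qed

lemma Stab_adj_mult_vec:
  assumes "a \<in> Stab" "x \<in> carrier_vec d"
  shows "a *\<^sub>v (adj_mat a *\<^sub>v x) = x" "adj_mat a *\<^sub>v (a *\<^sub>v x) = x"
  using assoc_mult_mat_vec[OF StabD(1)[OF assms(1)] StabD(1)[OF Stab_adj(1)[OF assms(1)]] assms(2)]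
    assoc_mult_mat_vec[OF StabD(1)[OF Stab_adj(1)[OF assms(1)]] StabD(1)[OF assms(1)] assms(2)]
    Stab_adj[OF assms(1)] assms(2) by auto

lemma commutator_eq_transv:
  assumes a: "a \<in> Stab" and b: "b \<in> Stab"
    and comm: "\<And>x. x \<in> carrier_vec d \<Longrightarrow> a *\<^sub>v (b *\<^sub>v x) = transv t *\<^sub>v (b *\<^sub>v (a *\<^sub>v x))"
  shows "commutator a b = transv t"
proof (rule mat_eq_by_mult_vecI[of _ d d])
  fix x :: "complex vec" assume x: "x \<in> carrier_vec d"
  have A': "adj_mat a \<in> carrier_mat d d" and B': "adj_mat b \<in> carrier_mat d d"
    using StabD(1)[OF Stab_adj(1)[OF a]] StabD(1)[OF Stab_adj(1)[OF b]] by auto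
  have "commutator a b *\<^sub>v x = transv t *\<^sub>v (b *\<^sub>v (a *\<^sub>v (adj_mat a *\<^sub>v (adj_mat b *\<^sub>v x))))"
    using commutator_mult_vec[OF a b x] comm A' B' x by simp
  also have "\<dots> = transv t *\<^sub>v x" using Stab_adj_mult_vec[OF a] Stab_adj_mult_vec[OF b] B' x by simp
  finally show "commutator a b *\<^sub>v x = transv t *\<^sub>v x" .
qed (use commutator_in_Stab[OF a b] StabD(1) in auto)

lemma adj_mat_mult_transv:
  assumes a: "a \<in> Stab"
  shows "adj_mat (a * transv s) = transv (-s) * adj_mat a"
proof -
  have a': "a * transv s \<in> Stab" using Stab_mult[OF a transv_in_Stab] .
  note A = StabD(1)[OF a] and A' = StabD(1)[OF Stab_adj(1)[OF a]]
  define X where "X = transv (-s) * adj_mat a"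
  have Xc: "X \<in> carrier_mat d d" unfolding X_def using mult_carrier_mat[OF transv_carrier(1) A'] .
  have "a * transv s * X = 1\<^sub>m d"
  proof (rule mat_eq_by_mult_vecI[of _ d d])
    fix x :: "complex vec" assume x: "x \<in> carrier_vec d"
    have ax: "adj_mat a *\<^sub>v x \<in> carrier_vec d" using A' x by simp
    have "a * transv s * X *\<^sub>v x = (a * transv s) *\<^sub>v (X *\<^sub>v x)"
      using assoc_mult_mat_vec[OF mult_carrier_mat[OF A transv_carrier(1)] Xc x] .
    also have "X *\<^sub>v x = transv (-s) *\<^sub>v (adj_mat a *\<^sub>v x)"
      unfolding X_def using assoc_mult_mat_vec[OF transv_carrier(1) A' x] .
    also have "(a * transv s) *\<^sub>v (transv (-s) *\<^sub>v (adj_mat a *\<^sub>v x))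
        = a *\<^sub>v (transv s *\<^sub>v (transv (-s) *\<^sub>v (adj_mat a *\<^sub>v x)))"
      using assoc_mult_mat_vec[OF A transv_carrier(1) mult_mat_vec_carrier[OF transv_carrier(1) ax]] .
    also have "\<dots> = x" using transv_cancel_vec A' x Stab_adj_mult_vec[OF a x] by simp
    finally show "a * transv s * X *\<^sub>v x = 1\<^sub>m d *\<^sub>v x" using x by simp
  qed (use mult_carrier_mat[OF mult_carrier_mat[OF A transv_carrier(1)] Xc] in simp_all)
  note aX = this
  have adjc: "adj_mat (a * transv s) \<in> carrier_mat d d" using StabD(1)[OF Stab_adj(1)[OF a']] .
  have a'c: "a * transv s \<in> carrier_mat d d" using StabD(1)[OF a'] .
  have "adj_mat (a * transv s) = adj_mat (a * transv s) * ((a * transv s) * X)"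
    using right_mult_one_mat[OF adjc] aX by simp
  also have "\<dots> = (adj_mat (a * transv s) * (a * transv s)) * X" using assoc_mult_mat[OF adjc a'c Xc] by simp
  also have "\<dots> = X" using Stab_adj(3)[OF a'] left_mult_one_mat[OF Xc] by simp
  finally show ?thesis unfolding X_def .
qed

text \<open>Since transvections are central, commutators only depend on the cosets modulo them.\<close>
lemma commutator_mult_transv:
  assumes a: "a \<in> Stab" and b: "b \<in> Stab"
  shows "commutator (a * transv s) (b * transv t) = commutator a b"
proof (rule mat_eq_by_mult_vecI[of _ d d])
  have a': "a * transv s \<in> Stab" and b': "b * transv t \<in> Stab" using Stab_mult transv_in_Stab a b by auto
  show "commutator (a * transv s) (b * transv t) \<in> carrier_mat d d" "commutator a b \<in> carrier_mat d d"
    using StabD(1)[OF commutator_in_Stab[OF a' b']] StabD(1)[OF commutator_in_Stab[OF a b]] by auto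
  fix x :: "complex vec" assume x: "x \<in> carrier_vec d"
  note A = StabD(1)[OF a] and B = StabD(1)[OF b]
  note A' = StabD(1)[OF Stab_adj(1)[OF a]] and B' = StabD(1)[OF Stab_adj(1)[OF b]]
  define y where "y = adj_mat b *\<^sub>v x"
  define z where "z = adj_mat a *\<^sub>v y"
  have yc: "y \<in> carrier_vec d" and zc: "z \<in> carrier_vec d" unfolding y_def z_def using A' B' x by auto
  have kz: "transv r *\<^sub>v z \<in> carrier_vec d" "transv r *\<^sub>v (transv r' *\<^sub>v z) \<in> carrier_vec d" for r r'
    using zc by (auto intro!: mult_mat_vec_carrier[OF transv_carrier(1)])
  have "adj_mat (b * transv t) *\<^sub>v x = transv (-t) *\<^sub>v y"
    unfolding adj_mat_mult_transv[OF b] y_def using assoc_mult_mat_vec[OF transv_carrier(1) B' x] .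
  moreover have "adj_mat (a * transv s) *\<^sub>v (transv (-t) *\<^sub>v y) = transv (-t) *\<^sub>v (transv (-s) *\<^sub>v z)"
  proof -
    have "adj_mat (a * transv s) *\<^sub>v (transv (-t) *\<^sub>v y) = transv (-s) *\<^sub>v (adj_mat a *\<^sub>v (transv (-t) *\<^sub>v y))"
      unfolding adj_mat_mult_transv[OF a]
      using assoc_mult_mat_vec[OF transv_carrier(1) A' mult_mat_vec_carrier[OF transv_carrier(1) yc]] .
    also have "adj_mat a *\<^sub>v (transv (-t) *\<^sub>v y) = transv (-t) *\<^sub>v z"
      unfolding z_def using transv_central_vec[OF Stab_adj(1)[OF a] yc] .
    finally show ?thesis using transv_add_vec[OF zc] by (simp add: add.commute)
  qed
  moreover have "(b * transv t) *\<^sub>v (transv (-t) *\<^sub>v (transv (-s) *\<^sub>v z)) = transv (-s) *\<^sub>v (b *\<^sub>v z)"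
    using assoc_mult_mat_vec[OF B transv_carrier(1) kz(2)] transv_cancel_vec[OF kz(1)]
      transv_central_vec[OF b zc] by simp
  moreover have "(a * transv s) *\<^sub>v (transv (-s) *\<^sub>v (b *\<^sub>v z)) = a *\<^sub>v (b *\<^sub>v z)"
    using assoc_mult_mat_vec[OF A transv_carrier(1) mult_mat_vec_carrier[OF transv_carrier(1) mult_mat_vec_carrier[OF B zc]]]
      transv_cancel_vec[OF mult_mat_vec_carrier[OF B zc]] by simp
  ultimately show "commutator (a * transv s) (b * transv t) *\<^sub>v x = commutator a b *\<^sub>v x"
    using commutator_mult_vec[OF a' b' x] commutator_mult_vec[OF a b x] unfolding z_def y_def by simp
qed

lemma transv_eq_commutator_stab_lift:
  "\<exists>h1 \<in> SU_star (d-1) \<alpha>. \<exists>h2 \<in> SU_star (d-1) \<alpha>. transv t = commutator (stab_lift h1) (stab_lift h2)"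
proof -
  define a where "a = (if p = 0 then 1 else 0 :: nat)"
  have a: "a < d" "a \<noteq> p" unfolding a_def using d_ge_2 by auto
  define u where "u = (e a :: complex vec)"
  define v where "v = (\<i> * of_real (- t / 2)) \<cdot>\<^sub>v e a"
  have uv: "u \<in> carrier_vec d" "v \<in> carrier_vec d" "u $ p = 0" "v $ p = 0"
    unfolding u_def v_def using a p_less by auto
  have "Q u v = \<i> * of_real (t / 2)"
    unfolding u_def v_def using Qform_unit_vec_self[OF a(1)] by (simp add: Qform_smult_right)
  from arg_cong[OF this, of Im] have t: "2 * Im (Q u v) = t" by simp
  have E: "eichler u 1 \<in> Stab" "eichler v 1 \<in> Stab" using eichler_in_Stab uv by auto
  have "commutator (eichler u 1) (eichler v 1) = transv t"
    using commutator_eq_transv[OF E] eichler_commutator_vec[OF uv(1,3,2,4)] unfolding t by blast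
  moreover obtain s1 where "eichler u 1 = stab_lift (mat_delete (eichler u 1) p p) * transv s1"
    using Stab_eq_stab_lift_mult_transv[OF E(1)] by blast
  moreover obtain s2 where "eichler v 1 = stab_lift (mat_delete (eichler v 1) p p) * transv s2"
    using Stab_eq_stab_lift_mult_transv[OF E(2)] by blast
  moreover note R = Stab_restrict_SU_star[OF E(1)] Stab_restrict_SU_star[OF E(2)]
  ultimately show ?thesis
    using commutator_mult_transv[OF stab_lift_in_Stab[OF R(1)] stab_lift_in_Stab[OF R(2)]] R by metis
qed

subsection \<open>Zariski density\<close>

lemma stab_lift_\<Gamma>'_SL:
  assumes "g' \<in> \<Gamma>' \<inter> SL_mat (d-1)"
  shows "\<exists>G \<in> \<Gamma> \<inter> SU_Q d \<alpha>. \<exists>t. stab_lift g' = G * transv t"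
proof -
  obtain G where G: "G \<in> \<Gamma> \<inter> SU_Q d \<alpha>" "mat_delete G p p = g'" using \<Gamma>'_SL_lift[OF assms] by blast
  have GS: "G \<in> Stab" using G(1) \<Gamma>_SU_subset_Stab by blast
  obtain t where "G = stab_lift g' * transv t" using Stab_eq_stab_lift_mult_transv[OF GS] G(2) by blast
  then have "G * transv (-t) = stab_lift g'"
    by (simp add: assoc_mult_mat[OF stab_lift_carrier(1) transv_carrier(1) transv_carrier(1)] transv_add transv_zero)
  then show ?thesis using G(1) by metis
qed

context
  fixes f :: "complex mat \<Rightarrow> real"
  assumes IH: "zariski_dense_in (d-1) (\<Gamma>' \<inter> SL_mat (d-1)) (SU_star (d-1) \<alpha>)"
    and f: "f \<in> real_poly_fun d" and f_vanishes: "\<forall>A \<in> \<Gamma> \<inter> SU_Q d \<alpha>. f A = 0"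
begin

lemma vanishes_on_SU_star:
  assumes "F \<in> real_poly_fun (d-1)" "\<And>B. B \<in> \<Gamma>' \<inter> SL_mat (d-1) \<Longrightarrow> F B = 0" "B \<in> SU_star (d-1) \<alpha>"
  shows "F B = 0"
  using IH assms unfolding zariski_dense_in_def by blast

text \<open>The induction hypothesis is applied once for each of the two arguments of the commutator:
  \<open>B \<mapsto> f (\<gamma> [lift B, lift g])\<close> is polynomial and vanishes on \<open>\<Gamma>' \<inter> SL\<close>, because there the lifts lie
  in \<open>\<Gamma>\<close> up to central transvections, which drop out of commutators.\<close>
lemma vanishes_mult_commutator_stab_lift:
  assumes \<gamma>: "\<gamma> \<in> \<Gamma> \<inter> SU_Q d \<alpha>" and h1: "h1 \<in> SU_star (d-1) \<alpha>" and h2: "h2 \<in> SU_star (d-1) \<alpha>"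
  shows "f (\<gamma> * commutator (stab_lift h1) (stab_lift h2)) = 0"
proof -
  have \<gamma>c: "\<gamma> \<in> carrier_mat d d" using StabD(1) \<gamma> \<Gamma>_SU_subset_Stab by blast
  have poly: "(\<lambda>B. f (\<gamma> * commutator (M1 B) (M2 B))) \<in> real_poly_fun (d-1)"
    if "poly_mat_fun (d-1) d M1" "poly_mat_fun (d-1) d M2" for M1 M2
    unfolding commutator_def using that \<gamma>c
    by (intro real_poly_fun_comp[OF f] poly_mat_fun_mult poly_mat_fun_adj poly_mat_fun_const) auto
  have lifts: "f (\<gamma> * commutator (stab_lift g1) (stab_lift g2)) = 0"
    if g: "g1 \<in> \<Gamma>' \<inter> SL_mat (d-1)" "g2 \<in> \<Gamma>' \<inter> SL_mat (d-1)" for g1 g2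
  proof -
    obtain G1 t1 where G1: "G1 \<in> \<Gamma> \<inter> SU_Q d \<alpha>" "stab_lift g1 = G1 * transv t1"
      using stab_lift_\<Gamma>'_SL[OF g(1)] by blast
    obtain G2 t2 where G2: "G2 \<in> \<Gamma> \<inter> SU_Q d \<alpha>" "stab_lift g2 = G2 * transv t2"
      using stab_lift_\<Gamma>'_SL[OF g(2)] by blast
    have "commutator (stab_lift g1) (stab_lift g2) = commutator G1 G2"
      unfolding G1(2) G2(2) using commutator_mult_transv \<Gamma>_SU_subset_Stab G1(1) G2(1) by blast
    moreover have "commutator G1 G2 \<in> \<Gamma> \<inter> SU_Q d \<alpha>"
      unfolding commutator_def using G1(1) G2(1) by (intro \<Gamma>_SU_mult \<Gamma>_SU_adj)
    ultimately show ?thesis using \<Gamma>_SU_mult \<gamma> f_vanishes by simp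
  qed
  have "f (\<gamma> * commutator (stab_lift h1) (stab_lift g2)) = 0" if "g2 \<in> \<Gamma>' \<inter> SL_mat (d-1)" for g2
    using vanishes_on_SU_star[OF poly[OF poly_mat_fun_stab_lift poly_mat_fun_const] lifts[OF _ that] h1] by simp
  then show ?thesis
    using vanishes_on_SU_star[OF poly[OF poly_mat_fun_const poly_mat_fun_stab_lift] _ h2] by simp
qed

lemma vanishes_mult_transv: "\<gamma> \<in> \<Gamma> \<inter> SU_Q d \<alpha> \<Longrightarrow> f (\<gamma> * transv t) = 0"
  using transv_eq_commutator_stab_lift vanishes_mult_commutator_stab_lift by metis

lemma vanishes_on_Stab:
  assumes g: "g \<in> Stab"
  shows "f g = 0"
proof -
  obtain t where t: "g = stab_lift (mat_delete g p p) * transv t"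
    using Stab_eq_stab_lift_mult_transv[OF g] by blast
  have "f (stab_lift g' * transv t) = 0" if g': "g' \<in> \<Gamma>' \<inter> SL_mat (d-1)" for g'
  proof -
    obtain G s where G: "G \<in> \<Gamma> \<inter> SU_Q d \<alpha>" "stab_lift g' = G * transv s"
      using stab_lift_\<Gamma>'_SL[OF g'] by blast
    have "G \<in> carrier_mat d d" using G(1) \<Gamma>_SU_subset_Stab StabD(1) by blast
    then have "stab_lift g' * transv t = G * transv (s + t)"
      unfolding G(2) by (simp add: assoc_mult_mat[of _ d d _ d _ d] transv_add)
    then show ?thesis using vanishes_mult_transv[OF G(1)] by simp
  qed
  moreover have "(\<lambda>B. f (stab_lift B * transv t)) \<in> real_poly_fun (d-1)"
    by (rule real_poly_fun_comp[OF f poly_mat_fun_mult[OF poly_mat_fun_stab_lift poly_mat_fun_const]]) simp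
  ultimately show ?thesis
    using vanishes_on_SU_star[of "\<lambda>B. f (stab_lift B * transv t)"] Stab_restrict_SU_star[OF g] t by metis
qed

end

lemma zariski_dense_\<Gamma>_SU_Stab:
  assumes "zariski_dense_in (d-1) (\<Gamma>' \<inter> SL_mat (d-1)) (SU_star (d-1) \<alpha>)"
  shows "zariski_dense_in d (\<Gamma> \<inter> SU_Q d \<alpha>) Stab"
  unfolding zariski_dense_in_def using \<Gamma>_SU_subset_Stab vanishes_on_Stab[OF assms] by blast

end

theorem mainTheorem11:
  fixes d :: nat and \<alpha> :: real and p :: nat and w :: "complex vec"
  assumes hd: "d \<ge> 5"
    and h\<alpha>: "0 < \<alpha>" "\<alpha> < 1/2"
    and hint: "real d * \<alpha> \<in> \<int>"
    and IH: "usual_dense_in (d - 1) (gen_group (d - 1) (Lop (d - 1) \<alpha> ` {..<d - 1}) \<inter> SL_mat (d - 1))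
                (SU_star (d - 1) \<alpha>)
           \<or> zariski_dense_in (d - 1) (gen_group (d - 1) (Lop (d - 1) \<alpha> ` {..<d - 1}) \<inter> SL_mat (d - 1))
                (SU_star (d - 1) \<alpha>)"
    and hp: "p < d"
    and hw: "w \<in> carrier_vec d" "w \<noteq> 0\<^sub>v d"
    and hwspan: "{y \<in> carrier_vec d. \<forall>h \<in> carrier_vec d. h $ p = 0 \<longrightarrow> Qform d \<alpha> y h = 0}
                 = {c \<cdot>\<^sub>v w | c. True}"
  shows "zariski_dense_in d (gen_group d (Lop d \<alpha> ` ({..<d} - {p})) \<inter> SU_Q d \<alpha>)
           {g \<in> SU_Q d \<alpha>. g *\<^sub>v w = w}"
proof -
  interpret stabiliser_setup \<alpha> d p w
    using assms by unfold_locales auto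
  show ?thesis
    using zariski_dense_\<Gamma>_SU_Stab IH usual_dense_imp_zariski_dense unfolding Stab_def by blast
qed

end
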